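(* In any convex resource theory, for any input state $\rho$ and output state $\rho'$, $H\big(\rho\,\big|\,V_{\mathcal F'}(\rho')^{-1}\big)\ge P(\rho\to\rho')\ge H\big(\rho\,\big|\,R^{\mathcal F'}_{\mathcal F'}(\rho')\big)$.
   Context: Finite dimensions; $\langle A,B\rangle=\mathrm{Tr}(AB)$; $A\le B$ means $B-A\ge0$; $\mathrm{id}$ is the identity operator. Input free set $\mathcal F$ and output free set $\mathcal F'$ are closed convex sets of density operators. $\mathrm{cone}(\mathcal F)=\{\lambda\sigma:\lambda\ge0,\sigma\in\mathcal F\}$, $A\le_{\mathcal F}B$ iff $B-A\in\mathrm{cone}(\mathcal F)$; $R^{\mathcal F}_{\max}(X\|Y)=\inf\{\lambda:X\le_{\mathcal F}\lambda Y\}$ ($\inf\emptyset=\infty$), $R^{\mathcal F}_{\mathcal F}(\rho)=\min_{\sigma\in\mathcal F}R^{\mathcal F}_{\max}(\rho\|\sigma)$. $V_{\mathcal F}(\rho)=\max_{\sigma\in\mathcal F}\langle\Pi_\rho,\sigma\rangle$ with $\Pi_\rho$ the projector onto $\operatorname{supp}\rho$; $0^{-1}=\infty$, $\infty^{-1}=0$. For $t\in\mathbb R_+\cup\{\infty\}$: $H(\rho\,|\,t)=\max\{\langle\rho,W\rangle:\ 0\le W\le Z\le\mathrm{id},\ \langle W,\rho\rangle=\langle Z,\rho\rangle,\ \langle W,\sigma\rangle\le\frac1t\langle Z,\sigma\rangle\ \forall\sigma\in\mathcal F\}$. $\mathbb O$: completely positive trace-non-increasing maps $\mathcal E$ such that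 for every $\sigma\in\mathcal F$ there exist $\sigma'\in\mathcal F'$ and $p\in[0,1]$ with $\mathcal E(\sigma)=p\sigma'$. $P(\rho\to\rho')=\max\{p:\ \mathcal E(\rho)=p\rho',\ \mathcal E\in\mathbb O\}$. *)

theory Defs
  imports "Jordan_Normal_Form.Matrix" "HOL-Library.Extended_Real"
begin

definition mtrace :: "complex mat \<Rightarrow> complex" where
  "mtrace A = (\<Sum>i<dim_row A. A $$ (i,i))"

definition adj :: "complex mat \<Rightarrow> complex mat" where
  "adj A = mat (dim_col A) (dim_row A) (\<lambda>(i,j). cnj (A $$ (j,i)))"

definition hs :: "complex mat \<Rightarrow> complex mat \<Rightarrow> complex" where
  "hs A B = mtrace (A * B)"

text \<open>Positive semidefinite \<open>n\<times>n\<close> matrix (over \<open>\<complex>\<close> this entails Hermitian).\<close>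
definition psd :: "nat \<Rightarrow> complex mat \<Rightarrow> bool" where
  "psd n A \<longleftrightarrow> A \<in> carrier_mat n n \<and>
     (\<forall>v \<in> carrier_vec n. let z = conjugate v \<bullet> (A *\<^sub>v v) in Im z = 0 \<and> 0 \<le> Re z)"

definition loewner_le :: "nat \<Rightarrow> complex mat \<Rightarrow> complex mat \<Rightarrow> bool" where
  "loewner_le n A B \<longleftrightarrow> A \<in> carrier_mat n n \<and> B \<in> carrier_mat n n \<and> psd n (B - A)"

definition density :: "nat \<Rightarrow> complex mat \<Rightarrow> bool" where
  "density n \<rho> \<longleftrightarrow> psd n \<rho> \<and> mtrace \<rho> = 1"

definition is_supp_proj :: "nat \<Rightarrow> complex mat \<Rightarrow> complex mat \<Rightarrow> bool" where
  "is_supp_proj n \<rho> P \<longleftrightarrow> P \<in> carrier_mat n n \<and> P * P = P \<and> adj P = P \<and>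
     (\<lambda>v. P *\<^sub>v v) ` carrier_vec n = (\<lambda>v. \<rho> *\<^sub>v v) ` carrier_vec n"

definition supp_proj :: "nat \<Rightarrow> complex mat \<Rightarrow> complex mat" where
  "supp_proj n \<rho> = (SOME P. is_supp_proj n \<rho> P)"

definition mat_convex :: "complex mat set \<Rightarrow> bool" where
  "mat_convex S \<longleftrightarrow> (\<forall>A\<in>S. \<forall>B\<in>S. \<forall>t::real. 0 \<le> t \<and> t \<le> 1 \<longrightarrow>
      (complex_of_real t \<cdot>\<^sub>m A + complex_of_real (1 - t) \<cdot>\<^sub>m B) \<in> S)"

definition mat_closed :: "nat \<Rightarrow> complex mat set \<Rightarrow> bool" where
  "mat_closed n S \<longleftrightarrow> (\<forall>X A. (\<forall>k. X k \<in> S) \<and> A \<in> carrier_mat n n \<and>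
      (\<forall>i<n. \<forall>j<n. (\<lambda>k. X k $$ (i,j)) \<longlonglongrightarrow> A $$ (i,j)) \<longrightarrow> A \<in> S)"

definition free_set :: "nat \<Rightarrow> complex mat set \<Rightarrow> bool" where
  "free_set n S \<longleftrightarrow> (\<forall>\<sigma>\<in>S. density n \<sigma>) \<and> mat_convex S \<and> mat_closed n S"

definition mcone :: "complex mat set \<Rightarrow> complex mat set" where
  "mcone S = {complex_of_real l \<cdot>\<^sub>m \<sigma> | l \<sigma>. 0 \<le> l \<and> \<sigma> \<in> S}"

definition cone_le :: "complex mat set \<Rightarrow> complex mat \<Rightarrow> complex mat \<Rightarrow> bool" where
  "cone_le S A B \<longleftrightarrow> B - A \<in> mcone S"

definition Rmax :: "complex mat set \<Rightarrow> complex mat \<Rightarrow> complex mat \<Rightarrow> ereal" where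
  "Rmax S X Y = Inf (ereal ` {l::real. cone_le S X (complex_of_real l \<cdot>\<^sub>m Y)})"

definition RFF :: "complex mat set \<Rightarrow> complex mat \<Rightarrow> ereal" where
  "RFF S \<rho> = Inf ((\<lambda>\<sigma>. Rmax S \<rho> \<sigma>) ` S)"

definition VF :: "nat \<Rightarrow> complex mat set \<Rightarrow> complex mat \<Rightarrow> real" where
  "VF n S \<rho> = Sup ((\<lambda>\<sigma>. Re (hs (supp_proj n \<rho>) \<sigma>)) ` S)"

definition einv :: "ereal \<Rightarrow> ereal" where
  "einv t = (if t = 0 then \<infinity> else if t = \<infinity> then 0 else ereal (1 / real_of_ereal t))"

definition Hfeas :: "nat \<Rightarrow> complex mat set \<Rightarrow> complex mat \<Rightarrow> ereal \<Rightarrow> complex mat \<Rightarrow> complex mat \<Rightarrow> bool" where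
  "Hfeas n S \<rho> t W Z \<longleftrightarrow>
     loewner_le n (0\<^sub>m n n) W \<and> loewner_le n W Z \<and> loewner_le n Z (1\<^sub>m n) \<and>
     hs W \<rho> = hs Z \<rho> \<and>
     (\<forall>\<sigma>\<in>S. ereal (Re (hs W \<sigma>)) \<le> einv t * ereal (Re (hs Z \<sigma>)))"

definition Hval :: "nat \<Rightarrow> complex mat set \<Rightarrow> complex mat \<Rightarrow> ereal \<Rightarrow> real" where
  "Hval n S \<rho> t = Sup {Re (hs \<rho> W) | W Z. Hfeas n S \<rho> t W Z}"

definition blk :: "nat \<Rightarrow> complex mat \<Rightarrow> nat \<Rightarrow> nat \<Rightarrow> complex mat" where
  "blk n X a b = mat n n (\<lambda>(r,c). X $$ (a*n + r, b*n + c))"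

text \<open>The map \<open>id\<^sub>k \<otimes> E\<close> acting on \<open>M\<^sub>k \<otimes> M\<^sub>n\<close> (block matrices).\<close>
definition ampl :: "nat \<Rightarrow> nat \<Rightarrow> nat \<Rightarrow> (complex mat \<Rightarrow> complex mat) \<Rightarrow> complex mat \<Rightarrow> complex mat" where
  "ampl k n m E X = mat (k*m) (k*m) (\<lambda>(i,j). E (blk n X (i div m) (j div m)) $$ (i mod m, j mod m))"

definition lin_map :: "nat \<Rightarrow> nat \<Rightarrow> (complex mat \<Rightarrow> complex mat) \<Rightarrow> bool" where
  "lin_map n m E \<longleftrightarrow>
     (\<forall>X\<in>carrier_mat n n. E X \<in> carrier_mat m m) \<and>
     (\<forall>X\<in>carrier_mat n n. \<forall>Y\<in>carrier_mat n n. E (X + Y) = E X + E Y) \<and>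
     (\<forall>X\<in>carrier_mat n n. \<forall>c. E (c \<cdot>\<^sub>m X) = c \<cdot>\<^sub>m E X)"

definition CPTNI :: "nat \<Rightarrow> nat \<Rightarrow> (complex mat \<Rightarrow> complex mat) \<Rightarrow> bool" where
  "CPTNI n m E \<longleftrightarrow> lin_map n m E \<and>
     (\<forall>k. \<forall>X. psd (k*n) X \<longrightarrow> psd (k*m) (ampl k n m E X)) \<and>
     (\<forall>X. psd n X \<longrightarrow> Re (mtrace (E X)) \<le> Re (mtrace X))"

definition free_ops :: "nat \<Rightarrow> nat \<Rightarrow> complex mat set \<Rightarrow> complex mat set \<Rightarrow> (complex mat \<Rightarrow> complex mat) set" where
  "free_ops n m F F' = {E. CPTNI n m E \<and>
     (\<forall>\<sigma>\<in>F. \<exists>\<sigma>'\<in>F'. \<exists>p::real. 0 \<le> p \<and> p \<le> 1 \<and> E \<sigma> = complex_of_real p \<cdot>\<^sub>m \<sigma>')}"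

definition Ptrans :: "nat \<Rightarrow> nat \<Rightarrow> complex mat set \<Rightarrow> complex mat set \<Rightarrow> complex mat \<Rightarrow> complex mat \<Rightarrow> real" where
  "Ptrans n m F F' \<rho> \<rho>' = Sup {p. \<exists>E\<in>free_ops n m F F'. E \<rho> = complex_of_real p \<cdot>\<^sub>m \<rho>'}"

end

theory Submission
  imports Defs
begin

text \<open>
  Upper bound: if a free operation \<open>E\<close> maps \<open>\<rho>\<close> to \<open>p \<rho>'\<close>, then its adjoint applied to the
  support projector \<open>\<Pi>\<^sub>\<rho>\<^sub>'\<close> and to the identity yields a feasible pair \<open>W = E\<^sup>\<dagger>(\<Pi>\<^sub>\<rho>\<^sub>')\<close>,
  \<open>Z = E\<^sup>\<dagger>(1)\<close> for \<open>H(\<rho> | V(\<rho>')\<^sup>-\<^sup>1)\<close> with value \<open>p\<close>: on a free \<open>\<sigma>\<close> with \<open>E(\<sigma>) = q \<sigma>'\<close>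
  one has \<open>\<langle>W,\<sigma>\<rangle> = q \<langle>\<Pi>\<^sub>\<rho>\<^sub>',\<sigma>'\<rangle> \<le> q V(\<rho>') = V(\<rho>') \<langle>Z,\<sigma>\<rangle>\<close>.

  Lower bound: write \<open>\<rho>' = R \<sigma>\<^sub>0 - (R - 1) \<tau>\<close> with \<open>R = R(\<rho>')\<close> and \<open>\<sigma>\<^sub>0, \<tau>\<close> free (the
  infimum is attained because free sets are compact). A feasible pair \<open>(W, Z)\<close> defines the
  measure-and-prepare channel \<open>X \<mapsto> \<langle>W,X\<rangle> \<rho>' + \<langle>Z - W,X\<rangle> \<tau>\<close>; it maps \<open>\<rho>\<close> to \<open>\<langle>W,\<rho>\<rangle> \<rho>'\<close>,
  and a free \<open>\<sigma>\<close> to \<open>a \<rho>' + b \<tau> = a R \<sigma>\<^sub>0 + (a + b - a R) \<tau>\<close>, a subnormalised convex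
  combination of free states precisely because \<open>a R \<le> a + b\<close>.
\<close>

section \<open>Quadratic forms and positive semidefinite matrices\<close>

text \<open>Vectors are represented by functions \<open>nat \<Rightarrow> complex\<close> of which only the first \<open>n\<close> values
  matter; this avoids carrier bookkeeping for vectors.\<close>

definition sesq_form :: "nat \<Rightarrow> complex mat \<Rightarrow> (nat \<Rightarrow> complex) \<Rightarrow> (nat \<Rightarrow> complex) \<Rightarrow> complex" where
  "sesq_form n A u v = (\<Sum>i<n. \<Sum>j<n. cnj (u i) * A $$ (i,j) * v j)"

definition quad_form :: "nat \<Rightarrow> complex mat \<Rightarrow> (nat \<Rightarrow> complex) \<Rightarrow> complex" where
  "quad_form n A v = sesq_form n A v v"

lemma complex_nonneg_iff: "(0::complex) \<le> z \<longleftrightarrow> Im z = 0 \<and> 0 \<le> Re z"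
  by (auto simp: less_eq_complex_def)

lemma complex_nonneg_eq_Re: "(0::complex) \<le> z \<Longrightarrow> z = complex_of_real (Re z)"
  by (simp add: complex_eq_iff complex_nonneg_iff)

lemma sesq_form_cong:
  "(\<And>i. i < n \<Longrightarrow> u i = u' i) \<Longrightarrow> (\<And>i. i < n \<Longrightarrow> v i = v' i) \<Longrightarrow> sesq_form n A u v = sesq_form n A u' v'"
  unfolding sesq_form_def by (auto intro!: sum.cong)

lemma scalar_prod_eq_quad_form:
  assumes "A \<in> carrier_mat n n" "v \<in> carrier_vec n"
  shows "conjugate v \<bullet> (A *\<^sub>v v) = quad_form n A (\<lambda>i. v $ i)"
proof -
  have "conjugate v \<bullet> (A *\<^sub>v v) = (\<Sum>i<n. cnj (v$i) * (\<Sum>j<n. A $$ (i,j) * v $ j))"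
    using assms unfolding scalar_prod_def mult_mat_vec_def row_def
    by (auto simp: atLeast0LessThan intro!: sum.cong)
  also have "\<dots> = quad_form n A (\<lambda>i. v $ i)"
    unfolding quad_form_def sesq_form_def by (simp add: sum_distrib_left mult.assoc)
  finally show ?thesis .
qed

lemma psd_iff_quad_form: "psd n A \<longleftrightarrow> A \<in> carrier_mat n n \<and> (\<forall>v. 0 \<le> quad_form n A v)"
proof
  assume p: "psd n A"
  hence A: "A \<in> carrier_mat n n" by (simp add: psd_def)
  have "0 \<le> quad_form n A v" for v
  proof -
    have "0 \<le> conjugate (vec n v) \<bullet> (A *\<^sub>v vec n v)"
      using p unfolding psd_def Let_def complex_nonneg_iff by simp
    also have "\<dots> = quad_form n A v"
      unfolding scalar_prod_eq_quad_form[OF A vec_carrier] quad_form_def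
      by (rule sesq_form_cong) auto
    finally show ?thesis .
  qed
  with A show "A \<in> carrier_mat n n \<and> (\<forall>v. 0 \<le> quad_form n A v)" by blast
next
  assume "A \<in> carrier_mat n n \<and> (\<forall>v. 0 \<le> quad_form n A v)"
  then show "psd n A"
    unfolding psd_def Let_def using scalar_prod_eq_quad_form complex_nonneg_iff by metis
qed

lemma psd_carrier: "psd n A \<Longrightarrow> A \<in> carrier_mat n n"
  by (simp add: psd_def)

lemma sesq_form_support:
  assumes S: "S \<subseteq> {..<n}" and u: "\<And>i. i \<notin> S \<Longrightarrow> u i = 0" and v: "\<And>i. i \<notin> S \<Longrightarrow> v i = 0"
  shows "sesq_form n A u v = (\<Sum>i\<in>S. \<Sum>j\<in>S. cnj (u i) * A $$ (i,j) * v j)"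
proof -
  have fS: "finite S" using S finite_subset by blast
  have "sesq_form n A u v = (\<Sum>i\<in>S. \<Sum>j<n. cnj (u i) * A $$ (i,j) * v j)"
    unfolding sesq_form_def by (rule sum.mono_neutral_right) (use S u fS in auto)
  also have "\<dots> = (\<Sum>i\<in>S. \<Sum>j\<in>S. cnj (u i) * A $$ (i,j) * v j)"
    by (rule sum.cong[OF refl], rule sum.mono_neutral_right) (use S v fS in auto)
  finally show ?thesis .
qed

lemma psd_diag_nonneg:
  assumes "psd n A" "i < n"
  shows "0 \<le> A $$ (i,i)"
proof -
  have "quad_form n A (\<lambda>l. if l = i then 1 else 0) = A $$ (i,i)"
    unfolding quad_form_def by (subst sesq_form_support[of "{i}"]) (use assms in auto)
  thus ?thesis using assms psd_iff_quad_form by metis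
qed

lemma psd_hermitian:
  assumes p: "psd n A" and i: "i < n" and j: "j < n"
  shows "A $$ (j,i) = cnj (A $$ (i,j))"
proof (cases "i = j")
  case True
  then show ?thesis using psd_diag_nonneg[OF p i] by (simp add: complex_eq_iff complex_nonneg_iff)
next
  case False
  define x where "x = A $$ (i,j)"
  define y where "y = A $$ (j,i)"
  have quad: "quad_form n A (\<lambda>l. if l = i then a else if l = j then b else 0)
      = cnj a * A$$(i,i) * a + cnj a * x * b + cnj b * y * a + cnj b * A$$(j,j) * b" for a b
    unfolding quad_form_def x_def y_def
    by (subst sesq_form_support[of "{i,j}"]) (use i j False in \<open>auto simp: algebra_simps\<close>)
  have real_diag: "Im (A$$(i,i)) = 0" "Im (A$$(j,j)) = 0"
    using psd_diag_nonneg[OF p i] psd_diag_nonneg[OF p j] by (auto simp: complex_nonneg_iff)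
  have real_quad: "Im (quad_form n A v) = 0" for v
    using p psd_iff_quad_form complex_nonneg_iff by blast
  have "Im x + Im y = 0"
    using real_quad[of "\<lambda>l. if l = i then 1 else if l = j then 1 else 0"] real_diag
    unfolding quad by simp
  moreover have "Re x - Re y = 0"
    using real_quad[of "\<lambda>l. if l = i then 1 else if l = j then \<i> else 0"] real_diag
    unfolding quad by simp
  ultimately show ?thesis unfolding x_def y_def by (simp add: complex_eq_iff)
qed

lemma psd_diag_zero_row:
  assumes p: "psd n A" and k: "k < n" and j: "j < n" and diag: "A $$ (k,k) = 0"
  shows "A $$ (k,j) = 0"
proof (rule ccontr)
  define z where "z = A $$ (k,j)"
  assume "A $$ (k,j) \<noteq> 0"
  then have z: "cmod z > 0" and kj: "k \<noteq> j" using diag by (auto simp: z_def)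
  have h: "A $$ (j,k) = cnj z" using psd_hermitian[OF p k j] z_def by simp
  define t :: real where "t = (Re (A$$(j,j)) + 1) / (2 * (cmod z)^2)"
  let ?v = "\<lambda>l. if l = k then - (complex_of_real t * z) else if l = j then 1 else 0"
  have quad: "quad_form n A ?v = A $$ (j,j) - 2 * complex_of_real t * (z * cnj z)"
    unfolding quad_form_def
    by (subst sesq_form_support[of "{k,j}"])
       (use k j kj in \<open>auto simp: algebra_simps diag h z_def[symmetric]\<close>)
  have "0 \<le> Re (quad_form n A ?v)" using p psd_iff_quad_form complex_nonneg_iff by blast
  also have "Re (quad_form n A ?v) = Re (A$$(j,j)) - 2 * t * (cmod z)^2"
    unfolding quad by (simp add: complex_mult_cnj cmod_def)
  also have "\<dots> = -1" unfolding t_def using z by (simp add: field_simps)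
  finally show False by simp
qed

lemma psd_diag_zero_col:
  assumes p: "psd n A" and k: "k < n" and i: "i < n" and diag: "A $$ (k,k) = 0"
  shows "A $$ (i,k) = 0"
  using psd_diag_zero_row[OF p k i diag] psd_hermitian[OF p i k] by simp

lemma sesq_form_diff_right: "sesq_form n A u (\<lambda>i. v i - c * w i) = sesq_form n A u v - c * sesq_form n A u w"
  unfolding sesq_form_def by (simp add: algebra_simps sum_subtractf sum_distrib_left)

lemma sesq_form_diff_left: "sesq_form n A (\<lambda>i. v i - c * w i) u = sesq_form n A v u - cnj c * sesq_form n A w u"
  unfolding sesq_form_def by (simp add: algebra_simps sum_subtractf sum_distrib_left)

lemma sesq_form_unit_left:
  "k < n \<Longrightarrow> sesq_form n A (\<lambda>l. if l = k then 1 else 0) v = (\<Sum>j<n. A $$ (k,j) * v j)"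
  unfolding sesq_form_def by (simp add: if_distrib if_distribR sum.If_cases cong: if_cong)

lemma sesq_form_unit_right:
  "k < n \<Longrightarrow> sesq_form n A u (\<lambda>l. if l = k then 1 else 0) = (\<Sum>i<n. cnj (u i) * A $$ (i,k))"
  unfolding sesq_form_def by (simp add: if_distrib if_distribR sum.If_cases cong: if_cong)

lemma sesq_form_minus_mat:
  "A \<in> carrier_mat n n \<Longrightarrow> B \<in> carrier_mat n n \<Longrightarrow> sesq_form n (A - B) u v = sesq_form n A u v - sesq_form n B u v"
  unfolding sesq_form_def by (simp add: algebra_simps sum_subtractf)

lemma psd_add: "psd n A \<Longrightarrow> psd n B \<Longrightarrow> psd n (A + B)"
  unfolding psd_iff_quad_form quad_form_def sesq_form_def
  by (auto simp: algebra_simps sum.distrib intro!: add_nonneg_nonneg)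

lemma psd_zero: "psd n (0\<^sub>m n n)"
  unfolding psd_iff_quad_form quad_form_def sesq_form_def by auto

section \<open>Decomposition of positive semidefinite matrices into rank-one terms\<close>

definition outer_sum :: "nat \<Rightarrow> nat \<Rightarrow> (nat \<Rightarrow> nat \<Rightarrow> complex) \<Rightarrow> complex mat" where
  "outer_sum n N f = mat n n (\<lambda>(i,j). \<Sum>r<N. f r i * cnj (f r j))"

lemma outer_sum_carrier [simp]: "outer_sum n N f \<in> carrier_mat n n"
  by (simp add: outer_sum_def)

lemma quad_form_outer_sum:
  "quad_form n (outer_sum n N f) v = (\<Sum>r<N. (\<Sum>i<n. cnj (v i) * f r i) * cnj (\<Sum>i<n. cnj (v i) * f r i))"
proof -
  have "quad_form n (outer_sum n N f) v = (\<Sum>i<n. \<Sum>j<n. \<Sum>r<N. cnj (v i) * f r i * (cnj (f r j) * v j))"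
    unfolding quad_form_def sesq_form_def outer_sum_def
    by (auto intro!: sum.cong simp: sum_distrib_left sum_distrib_right mult.assoc)
  also have "\<dots> = (\<Sum>r<N. \<Sum>i<n. \<Sum>j<n. cnj (v i) * f r i * (cnj (f r j) * v j))"
    by (simp add: sum.swap[where A="{..<n}" and B="{..<N}"] sum.swap[where B="{..<N}"])
  also have "\<dots> = (\<Sum>r<N. (\<Sum>i<n. cnj (v i) * f r i) * cnj (\<Sum>i<n. cnj (v i) * f r i))"
    by (simp add: sum_distrib_left sum_distrib_right mult_ac)
  finally show ?thesis .
qed

lemma outer_sum_psd: "psd n (outer_sum n N f)"
proof -
  have "(0::complex) \<le> z * cnj z" for z
    by (simp add: less_eq_complex_def)
  then show ?thesis
    unfolding psd_iff_quad_form quad_form_outer_sum by (simp del: cnj_sum add: sum_nonneg)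
qed

lemma outer_sum_Suc: "outer_sum n (Suc N) (f(N := c)) = outer_sum n N f + outer_sum n 1 (\<lambda>_. c)"
  by (rule eq_matI) (auto simp: outer_sum_def)

text \<open>One step of a Cholesky factorisation: if the rows and columns before \<open>k\<close> vanish and
  \<open>A\<^sub>k\<^sub>k \<noteq> 0\<close>, subtracting \<open>c c\<^sup>*\<close> with \<open>c = A\<^sub>\<bullet>\<^sub>k / \<surd>A\<^sub>k\<^sub>k\<close> clears row and column \<open>k\<close>
  and keeps the matrix positive semidefinite (it is the Schur complement).\<close>

locale cholesky_step =
  fixes n k :: nat and A :: "complex mat"
  assumes psd: "psd n A" and k: "k < n" and pivot: "A $$ (k,k) \<noteq> 0"
    and zero: "\<forall>i<n. \<forall>j<n. (i < k \<or> j < k) \<longrightarrow> A $$ (i,j) = 0"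
begin

definition s :: complex where "s = complex_of_real (sqrt (Re (A $$ (k,k))))"

definition c :: "nat \<Rightarrow> complex" where "c i = A $$ (i,k) / s"

lemma carrier: "A \<in> carrier_mat n n"
  using psd by (rule psd_carrier)

lemma pivot_real: "cnj (A $$ (k,k)) = A $$ (k,k)"
  using psd_hermitian[OF psd k k] by simp

lemma s_square: "s * s = A $$ (k,k)"
proof -
  have "0 \<le> A $$ (k,k)" by (rule psd_diag_nonneg[OF psd k])
  then have "A $$ (k,k) = complex_of_real (Re (A $$ (k,k)))" and "0 \<le> Re (A $$ (k,k))"
    by (auto simp: complex_nonneg_iff complex_eq_iff)
  then show ?thesis unfolding s_def of_real_mult[symmetric] real_sqrt_mult_self by simp
qed

lemma s_real: "cnj s = s"
  by (simp add: s_def)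

lemma s_nonzero: "s \<noteq> 0"
  using s_square pivot by auto

lemma entry_sym: "i < n \<Longrightarrow> A $$ (i,k) = cnj (A $$ (k,i))"
  using psd_hermitian[OF psd k] by simp

lemma remainder_entry:
  "i < n \<Longrightarrow> j < n \<Longrightarrow> (A - outer_sum n 1 (\<lambda>_. c)) $$ (i,j) = A $$ (i,j) - c i * cnj (c j)"
  using carrier by (simp add: outer_sum_def)

lemma remainder_psd: "psd n (A - outer_sum n 1 (\<lambda>_. c))"
  unfolding psd_iff_quad_form
proof (intro conjI allI)
  show "A - outer_sum n 1 (\<lambda>_. c) \<in> carrier_mat n n"
    using carrier by (simp add: minus_carrier_mat)
  fix v
  define T where "T = (\<Sum>j<n. A $$ (k,j) * v j)"
  define e where "e = (\<lambda>l. if l = k then 1 else (0::complex))"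
  have Av: "sesq_form n A e v = T" unfolding T_def e_def using sesq_form_unit_left[OF k] .
  have vA: "sesq_form n A v e = cnj T"
    unfolding T_def e_def sesq_form_unit_right[OF k] cnj_sum
    by (rule sum.cong) (simp_all add: entry_sym)
  have Ae: "sesq_form n A e e = A $$ (k,k)"
    unfolding e_def sesq_form_unit_left[OF k] using k by (simp add: sum.If_cases if_distrib)
  define a where "a = A $$ (k,k)"
  define t where "t = T / a"
  have a: "a \<noteq> 0" "cnj a = a" using pivot pivot_real unfolding a_def by auto
  have "quad_form n A (\<lambda>i. v i - t * e i) = quad_form n A v - cnj t * T - t * cnj T + cnj t * t * a"
    unfolding quad_form_def sesq_form_diff_left sesq_form_diff_right Av vA Ae a_def
    by (simp add: algebra_simps)
  also have "\<dots> = quad_form n A v - cnj T * T / a"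
    unfolding t_def using a by (simp add: field_simps)
  finally have shifted: "quad_form n A (\<lambda>i. v i - t * e i) = quad_form n A v - cnj T * T / a" .
  have "(\<Sum>i<n. cnj (v i) * c i) = cnj T / s"
    unfolding T_def c_def cnj_sum sum_divide_distrib by (rule sum.cong) (simp_all add: entry_sym)
  then have "quad_form n (outer_sum n 1 (\<lambda>_. c)) v = cnj T * T / a"
    unfolding quad_form_outer_sum a_def using s_square s_real by simp
  moreover have "quad_form n (A - outer_sum n 1 (\<lambda>_. c)) v
      = quad_form n A v - quad_form n (outer_sum n 1 (\<lambda>_. c)) v"
    unfolding quad_form_def by (rule sesq_form_minus_mat[OF carrier outer_sum_carrier])
  ultimately have "quad_form n (A - outer_sum n 1 (\<lambda>_. c)) v = quad_form n A (\<lambda>i. v i - t * e i)"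
    using shifted by simp
  then show "0 \<le> quad_form n (A - outer_sum n 1 (\<lambda>_. c)) v"
    using psd psd_iff_quad_form by metis
qed

lemma remainder_zero:
  assumes "i < n" "j < n" "i < Suc k \<or> j < Suc k"
  shows "(A - outer_sum n 1 (\<lambda>_. c)) $$ (i,j) = 0"
proof -
  have c_zero: "c l = 0" if "l < k" for l using zero k that by (simp add: c_def)
  consider "i < k \<or> j < k" | "i = k" | "j = k" using assms(3) by linarith
  then show ?thesis
  proof cases
    case 1 then show ?thesis unfolding remainder_entry[OF assms(1,2)] using zero assms c_zero by auto
  next
    case 2
    have "c k * cnj (c j) = A $$ (k,k) * A $$ (k,j) / (s * s)"
      unfolding c_def using s_real entry_sym[OF assms(2)] by simp
    then show ?thesis unfolding remainder_entry[OF assms(1,2)] using 2 s_square s_nonzero pivot by simp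
  next
    case 3
    have "c i * cnj (c k) = A $$ (i,k) * A $$ (k,k) / (s * s)"
      unfolding c_def using s_real pivot_real by simp
    then show ?thesis unfolding remainder_entry[OF assms(1,2)] using 3 s_square s_nonzero pivot by simp
  qed
qed

end

lemma psd_eq_outer_sum_from:
  assumes "n - k = d" "psd n A" "\<forall>i<n. \<forall>j<n. (i < k \<or> j < k) \<longrightarrow> A $$ (i,j) = 0"
  shows "\<exists>N f. A = outer_sum n N f"
  using assms
proof (induction d arbitrary: k A)
  case 0
  then show ?case
    by (intro exI[of _ 0] exI eq_matI) (use psd_carrier[OF "0.prems"(2)] in \<open>auto simp: outer_sum_def\<close>)
next
  case (Suc d)
  then have k: "k < n" and d: "n - Suc k = d" by auto
  show ?case
  proof (cases "A $$ (k,k) = 0")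
    case True
    have "\<forall>i<n. \<forall>j<n. (i < Suc k \<or> j < Suc k) \<longrightarrow> A $$ (i,j) = 0"
      using Suc.prems(3) psd_diag_zero_row[OF Suc.prems(2) k _ True]
        psd_diag_zero_col[OF Suc.prems(2) k _ True] less_Suc_eq by blast
    then show ?thesis using Suc.IH[OF d Suc.prems(2)] by blast
  next
    case False
    interpret cholesky_step n k A using Suc.prems k False by unfold_locales auto
    obtain N f where "A - outer_sum n 1 (\<lambda>_. c) = outer_sum n N f"
      using Suc.IH[OF d remainder_psd] remainder_zero by blast
    moreover have "A = (A - outer_sum n 1 (\<lambda>_. c)) + outer_sum n 1 (\<lambda>_. c)"
      by (rule eq_matI) (use carrier in \<open>auto simp: outer_sum_def\<close>)
    ultimately have "A = outer_sum n (Suc N) (f(N := c))" by (simp add: outer_sum_Suc)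
    then show ?thesis by blast
  qed
qed

lemma psd_eq_outer_sum: "psd n A \<Longrightarrow> \<exists>N f. A = outer_sum n N f"
  by (rule psd_eq_outer_sum_from[of n 0]) simp_all

lemma mtrace_eq_sum: "A \<in> carrier_mat n n \<Longrightarrow> mtrace A = (\<Sum>i<n. A $$ (i,i))"
  unfolding mtrace_def by simp

lemma mtrace_smult: "A \<in> carrier_mat n n \<Longrightarrow> mtrace (c \<cdot>\<^sub>m A) = c * mtrace A"
  by (simp add: mtrace_eq_sum[of _ n] sum_distrib_left)

lemma index_mult_eq_sum:
  "A \<in> carrier_mat n k \<Longrightarrow> B \<in> carrier_mat k m \<Longrightarrow> i < n \<Longrightarrow> j < m \<Longrightarrow>
   (A * B) $$ (i,j) = (\<Sum>l<k. A $$ (i,l) * B $$ (l,j))"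
  by (simp add: scalar_prod_def atLeast0LessThan)

lemma mult_mat_vec_eq_sum:
  "A \<in> carrier_mat n k \<Longrightarrow> v \<in> carrier_vec k \<Longrightarrow> A *\<^sub>v v = vec n (\<lambda>i. \<Sum>j<k. A $$ (i,j) * v $ j)"
  by (rule eq_vecI) (auto simp: scalar_prod_def atLeast0LessThan)

lemma hs_eq_sum:
  assumes "A \<in> carrier_mat n n" "C \<in> carrier_mat n n"
  shows "hs A C = (\<Sum>i<n. \<Sum>j<n. A $$ (i,j) * C $$ (j,i))"
  using assms unfolding hs_def mtrace_def times_mat_def scalar_prod_def row_def col_def
  by (auto simp: atLeast0LessThan intro!: sum.cong)

lemma hs_comm: "A \<in> carrier_mat n n \<Longrightarrow> C \<in> carrier_mat n n \<Longrightarrow> hs A C = hs C A"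
  unfolding hs_eq_sum[of A n C] hs_eq_sum[of C n A] by (subst sum.swap) (simp add: mult.commute)

lemma hs_diff_left:
  "A \<in> carrier_mat n n \<Longrightarrow> B \<in> carrier_mat n n \<Longrightarrow> C \<in> carrier_mat n n \<Longrightarrow>
   hs (A - B) C = hs A C - hs B C"
  by (simp add: hs_eq_sum[of _ n] minus_carrier_mat algebra_simps sum_subtractf)

lemma hs_add_right:
  "A \<in> carrier_mat n n \<Longrightarrow> B \<in> carrier_mat n n \<Longrightarrow> C \<in> carrier_mat n n \<Longrightarrow>
   hs C (A + B) = hs C A + hs C B"
  by (simp add: hs_eq_sum[of _ n] algebra_simps sum.distrib)

lemma hs_smult_right:
  "A \<in> carrier_mat n n \<Longrightarrow> C \<in> carrier_mat n n \<Longrightarrow> hs C (c \<cdot>\<^sub>m A) = c * hs C A"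
  by (simp add: hs_eq_sum[of _ n] algebra_simps sum_distrib_left)

lemma hs_one_left:
  assumes "C \<in> carrier_mat n n"
  shows "hs (1\<^sub>m n) C = mtrace C"
proof -
  have "(\<Sum>j<n. (if i = j then 1 else 0) * C $$ (j,i)) = C $$ (i,i)" if "i < n" for i
  proof -
    have "(\<Sum>j<n. (if i = j then 1 else 0) * C $$ (j,i)) = (\<Sum>j<n. if j = i then C $$ (j,i) else 0)"
      by (rule sum.cong) auto
    then show ?thesis using that by simp
  qed
  then show ?thesis unfolding hs_eq_sum[OF one_carrier_mat assms] mtrace_eq_sum[OF assms] by simp
qed

lemma hs_zero_left: "C \<in> carrier_mat n n \<Longrightarrow> hs (0\<^sub>m n n) C = 0"
  by (simp add: hs_eq_sum[of _ n])

lemma hs_outer_sum: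
  assumes "C \<in> carrier_mat n n"
  shows "hs (outer_sum n N f) C = (\<Sum>r<N. quad_form n C (f r))"
proof -
  have "hs (outer_sum n N f) C = (\<Sum>i<n. \<Sum>j<n. \<Sum>r<N. f r i * cnj (f r j) * C $$ (j,i))"
    unfolding hs_eq_sum[OF outer_sum_carrier assms]
    by (auto intro!: sum.cong simp: sum_distrib_right outer_sum_def)
  also have "\<dots> = (\<Sum>r<N. \<Sum>i<n. \<Sum>j<n. f r i * cnj (f r j) * C $$ (j,i))"
    by (simp add: sum.swap[where B="{..<N}"])
  also have "\<dots> = (\<Sum>r<N. quad_form n C (f r))"
    unfolding quad_form_def sesq_form_def
    by (rule sum.cong[OF refl], subst sum.swap) (simp add: mult_ac)
  finally show ?thesis .
qed

lemma quad_form_eq_hs: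
  assumes "A \<in> carrier_mat n n"
  shows "quad_form n A v = hs A (outer_sum n 1 (\<lambda>_. v))"
  unfolding quad_form_def sesq_form_def hs_eq_sum[OF assms outer_sum_carrier]
  by (intro sum.cong refl) (simp add: outer_sum_def mult_ac)

lemma hs_psd_nonneg:
  assumes "psd n A" "psd n C"
  shows "0 \<le> hs A C"
proof -
  obtain N f where A: "A = outer_sum n N f" using psd_eq_outer_sum[OF assms(1)] by blast
  show ?thesis unfolding A hs_outer_sum[OF psd_carrier[OF assms(2)]]
    using assms(2) psd_iff_quad_form by (auto intro!: sum_nonneg)
qed

lemma hs_psd_real: "psd n A \<Longrightarrow> psd n C \<Longrightarrow> hs A C = complex_of_real (Re (hs A C))"
  using hs_psd_nonneg complex_nonneg_eq_Re by blast

lemma psd_trace_nonneg: "psd n A \<Longrightarrow> 0 \<le> mtrace A"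
  using psd_diag_nonneg[of n A] psd_carrier[of n A] by (auto simp: mtrace_eq_sum intro!: sum_nonneg)

lemma psd_one: "psd n (1\<^sub>m n)"
proof -
  have "(\<Sum>r<n. (if r = i then 1 else 0) * cnj (if r = j then 1 else 0)) = (if i = j then 1 else (0::complex))"
    if "i < n" for i j
  proof -
    have "(\<Sum>r<n. (if r = i then 1 else 0) * cnj (if r = j then 1 else 0))
        = (\<Sum>r<n. if r = i then (if i = j then 1 else 0) else (0::complex))"
      by (rule sum.cong) auto
    then show ?thesis using that by simp
  qed
  then have "1\<^sub>m n = outer_sum n n (\<lambda>r i. if r = i then 1 else 0)"
    by (intro eq_matI) (simp_all add: outer_sum_def)
  then show ?thesis using outer_sum_psd by metis
qed

lemma density_carrier: "density n A \<Longrightarrow> A \<in> carrier_mat n n"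
  unfolding density_def using psd_carrier by blast

lemma density_psd: "density n A \<Longrightarrow> psd n A"
  unfolding density_def by blast

lemma free_set_density: "free_set n F \<Longrightarrow> \<sigma> \<in> F \<Longrightarrow> density n \<sigma>"
  unfolding free_set_def by blast

lemma hs_density_le_one:
  assumes Z: "Z \<in> carrier_mat n n" and ZI: "psd n (1\<^sub>m n - Z)" and \<sigma>: "density n \<sigma>"
  shows "Re (hs Z \<sigma>) \<le> 1"
proof -
  have c: "\<sigma> \<in> carrier_mat n n" using density_carrier[OF \<sigma>] .
  have "0 \<le> hs (1\<^sub>m n - Z) \<sigma>" by (rule hs_psd_nonneg[OF ZI density_psd[OF \<sigma>]])
  also have "hs (1\<^sub>m n - Z) \<sigma> = 1 - hs Z \<sigma>"
    using hs_diff_left[OF one_carrier_mat Z c] hs_one_left[OF c] \<sigma> by (simp add: density_def)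
  finally show ?thesis by (simp add: less_eq_complex_def)
qed

section \<open>The projector onto the support\<close>

definition cinner :: "nat \<Rightarrow> (nat \<Rightarrow> complex) \<Rightarrow> (nat \<Rightarrow> complex) \<Rightarrow> complex" where
  "cinner m u v = (\<Sum>i<m. cnj (u i) * v i)"

definition orthonormal :: "nat \<Rightarrow> nat \<Rightarrow> (nat \<Rightarrow> nat \<Rightarrow> complex) \<Rightarrow> bool" where
  "orthonormal m N f \<longleftrightarrow> (\<forall>r<N. \<forall>s<N. cinner m (f r) (f s) = (if r = s then 1 else 0))"

definition proj_span :: "nat \<Rightarrow> nat \<Rightarrow> (nat \<Rightarrow> nat \<Rightarrow> complex) \<Rightarrow> (nat \<Rightarrow> complex) \<Rightarrow> nat \<Rightarrow> complex" where
  "proj_span m N f x = (\<lambda>i. \<Sum>r<N. cinner m (f r) x * f r i)"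

definition in_range :: "nat \<Rightarrow> complex mat \<Rightarrow> (nat \<Rightarrow> complex) \<Rightarrow> bool" where
  "in_range m R g \<longleftrightarrow> (\<exists>u. \<forall>i<m. g i = (\<Sum>j<m. R $$ (i,j) * u j))"

lemma cinner_commute: "cinner m v u = cnj (cinner m u v)"
  unfolding cinner_def by (simp add: mult.commute)

lemma cinner_cong:
  "(\<And>i. i < m \<Longrightarrow> u i = u' i) \<Longrightarrow> (\<And>i. i < m \<Longrightarrow> v i = v' i) \<Longrightarrow> cinner m u v = cinner m u' v'"
  unfolding cinner_def by (auto intro!: sum.cong)

lemma cinner_diff_right: "cinner m u (\<lambda>i. v i - w i) = cinner m u v - cinner m u w"
  unfolding cinner_def by (simp add: algebra_simps sum_subtractf)

lemma cinner_add_right: "cinner m u (\<lambda>i. v i + w i) = cinner m u v + cinner m u w"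
  unfolding cinner_def by (simp add: algebra_simps sum.distrib)

lemma cinner_divide_right: "cinner m u (\<lambda>i. v i / c) = cinner m u v / c"
  unfolding cinner_def by (simp add: sum_divide_distrib)

lemma cinner_divide_left: "cinner m (\<lambda>i. v i / c) u = cinner m v u / cnj c"
  unfolding cinner_def by (simp add: sum_divide_distrib)

lemma cinner_sum_right: "cinner m u (\<lambda>i. \<Sum>r<N. c r * f r i) = (\<Sum>r<N. c r * cinner m u (f r))"
  unfolding cinner_def by (simp add: sum_distrib_left sum.swap[where B="{..<N}"] mult_ac)

lemma cinner_proj_span_right: "cinner m u (proj_span m N f x) = (\<Sum>r<N. cinner m (f r) x * cinner m u (f r))"
  unfolding proj_span_def by (rule cinner_sum_right)

lemma cinner_self_nonneg: "0 \<le> cinner m u u"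
  unfolding cinner_def by (intro sum_nonneg) (simp add: less_eq_complex_def)

lemma cinner_self_eq_zero:
  assumes "cinner m u u = 0" "i < m"
  shows "u i = 0"
proof -
  have "(\<Sum>j<m. (cmod (u j))^2) = Re (cinner m u u)"
    unfolding cinner_def by (simp add: cmod_def power2_eq_square)
  then have "(\<Sum>j<m. (cmod (u j))^2) = 0" using assms(1) by simp
  then show ?thesis using sum_nonneg_eq_0_iff[of "{..<m}" "\<lambda>j. (cmod (u j))^2"] assms(2) by auto
qed

lemma orthonormal_Suc:
  assumes "orthonormal m N f" and "\<And>s. s < N \<Longrightarrow> cinner m (f s) g = 0" and "cinner m g g = 1"
  shows "orthonormal m (Suc N) (f(N := g))"
  unfolding orthonormal_def
proof (intro allI impI)
  fix r s assume "r < Suc N" "s < Suc N"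
  then show "cinner m ((f(N := g)) r) ((f(N := g)) s) = (if r = s then 1 else 0)"
    using assms cinner_commute[of m g "f s"] unfolding orthonormal_def
    by (cases "r = N"; cases "s = N") auto
qed

lemma proj_span_Suc: "proj_span m (Suc N) (f(N := g)) x i = proj_span m N f x i + cinner m g x * g i"
  unfolding proj_span_def by simp

lemma cinner_residual_left:
  assumes "orthonormal m N f" "s < N"
  shows "cinner m (f s) (\<lambda>i. w i - proj_span m N f w i) = 0"
proof -
  have "cinner m (f s) (proj_span m N f w) = (\<Sum>t<N. if t = s then cinner m (f s) w else 0)"
    unfolding cinner_proj_span_right by (rule sum.cong) (use assms in \<open>auto simp: orthonormal_def\<close>)
  then show ?thesis using assms(2) by (simp add: cinner_diff_right)
qed

lemma cinner_residual_proj_span: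
  assumes "orthonormal m N f"
  shows "cinner m (\<lambda>i. w i - proj_span m N f w i) (proj_span m N f x) = 0"
  unfolding cinner_proj_span_right
  using cinner_residual_left[OF assms] cinner_commute[of m "\<lambda>i. w i - proj_span m N f w i"] by simp

lemma in_range_column:
  assumes "j < m"
  shows "in_range m R (\<lambda>i. R $$ (i,j))"
proof -
  have "(\<Sum>l<m. R $$ (i,l) * (if l = j then 1 else 0)) = (\<Sum>l<m. if l = j then R $$ (i,l) else 0)" for i
    by (rule sum.cong) auto
  then show ?thesis
    unfolding in_range_def using assms by (auto intro!: exI[of _ "\<lambda>l. if l = j then 1 else 0"])
qed

lemma in_range_sum:
  assumes "\<forall>r<N. in_range m R (f r)"
  shows "in_range m R (\<lambda>i. \<Sum>r<N. c r * f r i)"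
proof -
  have "\<forall>r. \<exists>u. r < N \<longrightarrow> (\<forall>i<m. f r i = (\<Sum>j<m. R $$ (i,j) * u j))"
    using assms unfolding in_range_def by blast
  then obtain U where U: "\<And>r i. r < N \<Longrightarrow> i < m \<Longrightarrow> f r i = (\<Sum>j<m. R $$ (i,j) * U r j)"
    using choice[of "\<lambda>r u. r < N \<longrightarrow> (\<forall>i<m. f r i = (\<Sum>j<m. R $$ (i,j) * u j))"] by blast
  have "(\<Sum>r<N. c r * f r i) = (\<Sum>j<m. R $$ (i,j) * (\<Sum>r<N. c r * U r j))" if "i < m" for i
  proof -
    have "(\<Sum>r<N. c r * f r i) = (\<Sum>r<N. c r * (\<Sum>j<m. R $$ (i,j) * U r j))"
      by (rule sum.cong) (simp_all add: U that)
    also have "\<dots> = (\<Sum>r<N. \<Sum>j<m. c r * (R $$ (i,j) * U r j))"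
      by (simp add: sum_distrib_left)
    also have "\<dots> = (\<Sum>j<m. \<Sum>r<N. c r * (R $$ (i,j) * U r j))"
      by (rule sum.swap)
    finally show ?thesis by (simp add: sum_distrib_left mult.left_commute)
  qed
  then show ?thesis unfolding in_range_def by (auto intro!: exI[of _ "\<lambda>j. \<Sum>r<N. c r * U r j"])
qed

lemma in_range_diff_divide:
  assumes "in_range m R x" "in_range m R y"
  shows "in_range m R (\<lambda>i. (x i - y i) / c)"
proof -
  obtain u v where "\<forall>i<m. x i = (\<Sum>j<m. R $$ (i,j) * u j)" "\<forall>i<m. y i = (\<Sum>j<m. R $$ (i,j) * v j)"
    using assms unfolding in_range_def by blast
  then have "(x i - y i) / c = (\<Sum>j<m. R $$ (i,j) * ((u j - v j) / c))" if "i < m" for i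
    using that by (simp add: right_diff_distrib diff_divide_distrib sum_subtractf sum_divide_distrib)
  then show ?thesis unfolding in_range_def by (auto intro!: exI[of _ "\<lambda>j. (u j - v j) / c"])
qed

lemma in_range_proj_span: "\<forall>r<N. in_range m R (f r) \<Longrightarrow> in_range m R (proj_span m N f x)"
  unfolding proj_span_def by (rule in_range_sum)

lemma orthonormal_append_residual:
  assumes on: "orthonormal m N f" and res: "res = (\<lambda>i. w i - proj_span m N f w i)"
    and c: "c * cnj c = cinner m res res" "c \<noteq> 0" and g: "g = (\<lambda>i. res i / c)"
  shows "orthonormal m (Suc N) (f(N := g))"
    and "proj_span m (Suc N) (f(N := g)) w i = w i"
    and "\<forall>i<m. proj_span m N f x i = x i \<Longrightarrow> i < m \<Longrightarrow> proj_span m (Suc N) (f(N := g)) x i = x i"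
proof -
  have nz: "cinner m res res \<noteq> 0" using c(2) unfolding c(1)[symmetric] by simp
  show "orthonormal m (Suc N) (f(N := g))"
  proof (rule orthonormal_Suc[OF on])
    show "cinner m (f s) g = 0" if "s < N" for s
      unfolding g cinner_divide_right using cinner_residual_left[OF on that] by (simp add: res)
    show "cinner m g g = 1"
      unfolding g cinner_divide_left cinner_divide_right using c nz by (simp add: mult.commute)
  qed
  have "cinner m res w = cinner m res (\<lambda>i. res i + proj_span m N f w i)"
    by (rule cinner_cong) (simp_all add: res)
  also have "\<dots> = cinner m res res"
    unfolding cinner_add_right using cinner_residual_proj_span[OF on] by (simp add: res)
  finally have "cinner m g w * g i = res i"
    unfolding g cinner_divide_left using c nz by (simp add: field_simps)
  then show "proj_span m (Suc N) (f(N := g)) w i = w i" unfolding proj_span_Suc by (simp add: res)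
  assume fixed: "\<forall>i<m. proj_span m N f x i = x i" and "i < m"
  have "cinner m res x = cinner m res (proj_span m N f x)"
    by (rule cinner_cong) (use fixed in simp_all)
  then have "cinner m res x = 0" using cinner_residual_proj_span[OF on] by (simp add: res)
  then show "proj_span m (Suc N) (f(N := g)) x i = x i"
    using fixed \<open>i < m\<close> unfolding proj_span_Suc g cinner_divide_left by simp
qed

lemma orthonormal_extend:
  assumes on: "orthonormal m N f" and rng: "\<forall>r<N. in_range m R (f r)" and w: "in_range m R w"
  shows "\<exists>N' f'. orthonormal m N' f' \<and> (\<forall>r<N'. in_range m R (f' r))
    \<and> (\<forall>i<m. proj_span m N' f' w i = w i)
    \<and> (\<forall>x. (\<forall>i<m. proj_span m N f x i = x i) \<longrightarrow> (\<forall>i<m. proj_span m N' f' x i = x i))"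
proof -
  define res where "res = (\<lambda>i. w i - proj_span m N f w i)"
  show ?thesis
  proof (cases "cinner m res res = 0")
    case True
    then have "\<forall>i<m. proj_span m N f w i = w i"
      using cinner_self_eq_zero unfolding res_def by fastforce
    then show ?thesis using on rng by blast
  next
    case False
    define c where "c = complex_of_real (sqrt (Re (cinner m res res)))"
    have "cinner m res res = complex_of_real (Re (cinner m res res))" "0 \<le> Re (cinner m res res)"
      using cinner_self_nonneg[of m res] by (auto simp: complex_nonneg_iff complex_eq_iff)
    then have c: "c * cnj c = cinner m res res"
      unfolding c_def complex_cnj_complex_of_real of_real_mult[symmetric] real_sqrt_mult_self by simp
    then have "c \<noteq> 0" using False by auto
    note append = orthonormal_append_residual[OF on res_def c this refl]
    have "\<forall>r<Suc N. in_range m R ((f(N := (\<lambda>i. res i / c))) r)"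
      using rng in_range_diff_divide[OF w in_range_proj_span[OF rng]]
      unfolding res_def by (simp add: less_Suc_eq)
    then show ?thesis
      using append by (intro exI[of _ "Suc N"] exI[of _ "f(N := (\<lambda>i. res i / c))"]) simp
  qed
qed

lemma orthonormal_range_basis:
  assumes "k \<le> m"
  shows "\<exists>N f. orthonormal m N f \<and> (\<forall>r<N. in_range m R (f r))
    \<and> (\<forall>j<k. \<forall>i<m. proj_span m N f (\<lambda>l. R $$ (l,j)) i = R $$ (i,j))"
  using assms
proof (induction k)
  case 0
  show ?case by (rule exI[of _ 0]) (auto simp: orthonormal_def)
next
  case (Suc k)
  then obtain N f where on: "orthonormal m N f" and rng: "\<forall>r<N. in_range m R (f r)"
    and fixed: "\<forall>j<k. \<forall>i<m. proj_span m N f (\<lambda>l. R $$ (l,j)) i = R $$ (i,j)" by auto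
  have k: "k < m" using Suc.prems by simp
  obtain N' f' where on': "orthonormal m N' f'" and rng': "\<forall>r<N'. in_range m R (f' r)"
    and new: "\<forall>i<m. proj_span m N' f' (\<lambda>l. R $$ (l,k)) i = R $$ (i,k)"
    and keep: "\<And>x. \<forall>i<m. proj_span m N f x i = x i \<Longrightarrow> \<forall>i<m. proj_span m N' f' x i = x i"
    using orthonormal_extend[OF on rng in_range_column[OF k]] by blast
  have "\<forall>i<m. proj_span m N' f' (\<lambda>l. R $$ (l,j)) i = R $$ (i,j)" if "j < Suc k" for j
  proof (cases "j = k")
    case False
    then have "\<forall>i<m. proj_span m N f (\<lambda>l. R $$ (l,j)) i = (\<lambda>l. R $$ (l,j)) i"
      using fixed that by simp
    then show ?thesis using keep by simp
  qed (use new in simp)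
  then show ?case using on' rng' by blast
qed

lemma outer_sum_idem:
  assumes "orthonormal m N f"
  shows "outer_sum m N f * outer_sum m N f = outer_sum m N f"
proof (rule eq_matI)
  fix i j assume "i < dim_row (outer_sum m N f)" "j < dim_col (outer_sum m N f)"
  then have i: "i < m" and j: "j < m" by (auto simp: outer_sum_def)
  have "(outer_sum m N f * outer_sum m N f) $$ (i,j)
      = (\<Sum>l<m. (\<Sum>r<N. f r i * cnj (f r l)) * (\<Sum>s<N. f s l * cnj (f s j)))"
    using index_mult_eq_sum[OF outer_sum_carrier outer_sum_carrier i j] i j by (simp add: outer_sum_def)
  also have "\<dots> = (\<Sum>l<m. \<Sum>r<N. \<Sum>s<N. f r i * cnj (f s j) * (cnj (f r l) * f s l))"
    by (simp add: sum_distrib_left sum_distrib_right mult_ac)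
  also have "\<dots> = (\<Sum>r<N. \<Sum>s<N. \<Sum>l<m. f r i * cnj (f s j) * (cnj (f r l) * f s l))"
    by (subst sum.swap, rule sum.cong[OF refl], rule sum.swap)
  also have "\<dots> = (\<Sum>r<N. \<Sum>s<N. f r i * cnj (f s j) * cinner m (f r) (f s))"
    unfolding cinner_def by (simp add: sum_distrib_left)
  also have "\<dots> = (\<Sum>r<N. \<Sum>s<N. if s = r then f r i * cnj (f r j) else 0)"
    by (intro sum.cong refl) (use assms in \<open>auto simp: orthonormal_def\<close>)
  also have "\<dots> = outer_sum m N f $$ (i,j)" using i j by (simp add: outer_sum_def)
  finally show "(outer_sum m N f * outer_sum m N f) $$ (i,j) = outer_sum m N f $$ (i,j)" .
qed (auto simp: outer_sum_def)

lemma adj_outer_sum: "adj (outer_sum m N f) = outer_sum m N f"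
  by (rule eq_matI) (auto simp: adj_def outer_sum_def mult.commute)

lemma outer_sum_mult_vec:
  assumes "v \<in> carrier_vec m"
  shows "outer_sum m N f *\<^sub>v v = vec m (proj_span m N f (\<lambda>j. v $ j))"
proof (rule eq_vecI)
  fix i assume "i < dim_vec (vec m (proj_span m N f (\<lambda>j. v $ j)))"
  then have i: "i < m" by simp
  have "(\<Sum>j<m. outer_sum m N f $$ (i,j) * v $ j) = (\<Sum>j<m. \<Sum>r<N. f r i * cnj (f r j) * v $ j)"
    using i by (auto simp: outer_sum_def sum_distrib_right intro!: sum.cong)
  also have "\<dots> = proj_span m N f (\<lambda>j. v $ j) i"
    unfolding proj_span_def cinner_def
    by (subst sum.swap) (simp add: sum_distrib_right sum_distrib_left mult_ac)
  finally show "(outer_sum m N f *\<^sub>v v) $ i = vec m (proj_span m N f (\<lambda>j. v $ j)) $ i"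
    using i assms by (simp add: mult_mat_vec_eq_sum[OF outer_sum_carrier assms])
qed (simp add: outer_sum_def)

lemma in_range_imp_mult_vec:
  assumes "R \<in> carrier_mat m m" "in_range m R g"
  shows "\<exists>u \<in> carrier_vec m. vec m g = R *\<^sub>v u"
proof -
  obtain u where "\<forall>i<m. g i = (\<Sum>j<m. R $$ (i,j) * u j)" using assms(2) unfolding in_range_def by blast
  then have "vec m g = R *\<^sub>v vec m u"
    by (intro eq_vecI) (use assms(1) in \<open>auto simp: mult_mat_vec_eq_sum\<close>)
  then show ?thesis by (intro bexI[of _ "vec m u"]) auto
qed

lemma proj_span_mult_vec:
  assumes R: "R \<in> carrier_mat m m" and v: "v \<in> carrier_vec m" and i: "i < m"
  shows "proj_span m N f (\<lambda>l. (R *\<^sub>v v) $ l) i = (\<Sum>j<m. v $ j * proj_span m N f (\<lambda>l. R $$ (l,j)) i)"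
proof -
  have "cinner m (f r) (\<lambda>l. (R *\<^sub>v v) $ l) = cinner m (f r) (\<lambda>l. \<Sum>j<m. v $ j * R $$ (l,j))" for r
    by (rule cinner_cong) (use R v in \<open>auto simp: mult_mat_vec_eq_sum mult.commute\<close>)
  then have "proj_span m N f (\<lambda>l. (R *\<^sub>v v) $ l) i
      = (\<Sum>r<N. (\<Sum>j<m. v $ j * cinner m (f r) (\<lambda>l. R $$ (l,j))) * f r i)"
    unfolding proj_span_def cinner_sum_right by simp
  also have "\<dots> = (\<Sum>r<N. \<Sum>j<m. v $ j * (cinner m (f r) (\<lambda>l. R $$ (l,j)) * f r i))"
    by (simp add: sum_distrib_right mult.assoc)
  also have "\<dots> = (\<Sum>j<m. \<Sum>r<N. v $ j * (cinner m (f r) (\<lambda>l. R $$ (l,j)) * f r i))"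
    by (rule sum.swap)
  also have "\<dots> = (\<Sum>j<m. v $ j * proj_span m N f (\<lambda>l. R $$ (l,j)) i)"
    unfolding proj_span_def by (simp add: sum_distrib_left)
  finally show ?thesis .
qed

lemma supp_proj_exists:
  assumes R: "R \<in> carrier_mat m m"
  shows "\<exists>P. is_supp_proj m R P"
proof -
  obtain N f where on: "orthonormal m N f" and rng: "\<forall>r<N. in_range m R (f r)"
    and fixed: "\<forall>j<m. \<forall>i<m. proj_span m N f (\<lambda>l. R $$ (l,j)) i = R $$ (i,j)"
    using orthonormal_range_basis[of m m R] by auto
  let ?P = "outer_sum m N f"
  have "(\<lambda>v. ?P *\<^sub>v v) ` carrier_vec m \<subseteq> (\<lambda>v. R *\<^sub>v v) ` carrier_vec m"
    using in_range_imp_mult_vec[OF R in_range_proj_span[OF rng]] outer_sum_mult_vec by fastforce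
  moreover have "R *\<^sub>v v \<in> (\<lambda>v. ?P *\<^sub>v v) ` carrier_vec m" if v: "v \<in> carrier_vec m" for v
  proof -
    have Rv: "R *\<^sub>v v \<in> carrier_vec m" using R v by simp
    have "proj_span m N f (\<lambda>l. (R *\<^sub>v v) $ l) i = (R *\<^sub>v v) $ i" if i: "i < m" for i
    proof -
      have "proj_span m N f (\<lambda>l. (R *\<^sub>v v) $ l) i = (\<Sum>j<m. v $ j * R $$ (i,j))"
        unfolding proj_span_mult_vec[OF R v i] by (rule sum.cong) (use fixed i in auto)
      then show ?thesis using R v i by (simp add: mult_mat_vec_eq_sum mult.commute)
    qed
    then have "?P *\<^sub>v (R *\<^sub>v v) = R *\<^sub>v v"
      unfolding outer_sum_mult_vec[OF Rv] using R by (intro eq_vecI) auto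
    then show ?thesis using Rv by (metis image_eqI)
  qed
  ultimately have "is_supp_proj m R ?P"
    unfolding is_supp_proj_def using outer_sum_idem[OF on] adj_outer_sum by auto
  then show ?thesis by blast
qed

lemma is_supp_proj_supp_proj: "R \<in> carrier_mat m m \<Longrightarrow> is_supp_proj m R (supp_proj m R)"
  unfolding supp_proj_def using supp_proj_exists by (rule someI_ex)

lemma hermitian_idempotent_psd:
  assumes A: "A \<in> carrier_mat m m" and idem: "A * A = A" and herm: "adj A = A"
  shows "psd m A"
proof -
  have "A = outer_sum m m (\<lambda>l i. A $$ (i,l))"
  proof (rule eq_matI)
    fix i j assume "i < dim_row (outer_sum m m (\<lambda>l i. A $$ (i,l)))" "j < dim_col (outer_sum m m (\<lambda>l i. A $$ (i,l)))"
    then have i: "i < m" and j: "j < m" by (auto simp: outer_sum_def)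
    have "A $$ (i,j) = (\<Sum>l<m. A $$ (i,l) * A $$ (l,j))"
      using index_mult_eq_sum[OF A A i j] idem by simp
    also have "\<dots> = (\<Sum>l<m. A $$ (i,l) * cnj (A $$ (j,l)))"
    proof (rule sum.cong[OF refl])
      fix l assume "l \<in> {..<m}"
      then have "A $$ (l,j) = cnj (A $$ (j,l))"
        using arg_cong[OF herm, of "\<lambda>B. B $$ (l,j)"] A j by (simp add: adj_def)
      then show "A $$ (i,l) * A $$ (l,j) = A $$ (i,l) * cnj (A $$ (j,l))" by simp
    qed
    finally show "A $$ (i,j) = outer_sum m m (\<lambda>l i. A $$ (i,l)) $$ (i,j)"
      using i j by (simp add: outer_sum_def)
  qed (use A in \<open>auto simp: outer_sum_def\<close>)
  then show ?thesis using outer_sum_psd by metis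
qed

lemma is_supp_proj_psd: "is_supp_proj m R P \<Longrightarrow> psd m P"
  unfolding is_supp_proj_def using hermitian_idempotent_psd by blast

lemma is_supp_proj_compl_psd:
  assumes "is_supp_proj m R P"
  shows "psd m (1\<^sub>m m - P)"
proof -
  have P: "P \<in> carrier_mat m m" and idem: "P * P = P" and herm: "adj P = P"
    using assms unfolding is_supp_proj_def by auto
  have Q: "1\<^sub>m m - P \<in> carrier_mat m m" using P by (simp add: minus_carrier_mat)
  have "(1\<^sub>m m - P) * (1\<^sub>m m - P) = 1\<^sub>m m * (1\<^sub>m m - P) - P * (1\<^sub>m m - P)"
    by (rule minus_mult_distrib_mat) (use P Q in auto)
  also have "P * (1\<^sub>m m - P) = P * 1\<^sub>m m - P * P"
    by (rule mult_minus_distrib_mat[of P m m]) (use P in auto)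
  also have "\<dots> = 0\<^sub>m m m" using P idem by simp
  also have "1\<^sub>m m * (1\<^sub>m m - P) - 0\<^sub>m m m = 1\<^sub>m m - P"
    unfolding left_mult_one_mat[OF Q] by (rule eq_matI) (use P in auto)
  finally have "(1\<^sub>m m - P) * (1\<^sub>m m - P) = 1\<^sub>m m - P" .
  moreover have "adj (1\<^sub>m m - P) = 1\<^sub>m m - P"
  proof (rule eq_matI)
    fix i j assume "i < dim_row (1\<^sub>m m - P)" "j < dim_col (1\<^sub>m m - P)"
    then have i: "i < m" and j: "j < m" using P by auto
    have "P $$ (i,j) = cnj (P $$ (j,i))"
      using arg_cong[OF herm, of "\<lambda>B. B $$ (i,j)"] P i j by (simp add: adj_def)
    then show "adj (1\<^sub>m m - P) $$ (i,j) = (1\<^sub>m m - P) $$ (i,j)"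
      using i j P by (simp add: adj_def)
  qed (use P in \<open>auto simp: adj_def\<close>)
  ultimately show ?thesis by (rule hermitian_idempotent_psd[OF Q])
qed

lemma mult_unit_vec_index:
  fixes A :: "'a :: comm_ring_1 mat"
  assumes "A \<in> carrier_mat m m" "i < m" "j < m"
  shows "(A *\<^sub>v unit_vec m j) $ i = A $$ (i,j)"
proof -
  have "(A *\<^sub>v unit_vec m j) $ i = (\<Sum>l<m. A $$ (i,l) * (if l = j then 1 else 0))"
    using assms by (simp add: mult_mat_vec_eq_sum unit_vec_def)
  also have "\<dots> = (\<Sum>l<m. if l = j then A $$ (i,l) else 0)"
    by (rule sum.cong) auto
  finally show ?thesis using assms(3) by simp
qed

text \<open>Every column of \<open>R\<close> lies in the range of \<open>P\<close>, on which \<open>P\<close> acts as the identity.\<close>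

lemma is_supp_proj_mult:
  assumes proj: "is_supp_proj m R P" and R: "R \<in> carrier_mat m m"
  shows "P * R = R"
proof -
  have P: "P \<in> carrier_mat m m" and idem: "P * P = P"
    and range: "(\<lambda>v. P *\<^sub>v v) ` carrier_vec m = (\<lambda>v. R *\<^sub>v v) ` carrier_vec m"
    using proj unfolding is_supp_proj_def by auto
  show ?thesis
  proof (rule eq_matI)
    fix i j assume "i < dim_row R" "j < dim_col R"
    then have i: "i < m" and j: "j < m" using R by auto
    define e where "e = (unit_vec m j :: complex vec)"
    have e: "e \<in> carrier_vec m" unfolding e_def by (rule unit_vec_carrier)
    obtain v where v: "v \<in> carrier_vec m" and Re: "R *\<^sub>v e = P *\<^sub>v v"
      using range e by (metis (no_types, lifting) image_eqI imageE)
    have "(P * R) *\<^sub>v e = P *\<^sub>v (P *\<^sub>v v)" using assoc_mult_mat_vec[OF P R e] Re by simp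
    also have "\<dots> = R *\<^sub>v e" using assoc_mult_mat_vec[OF P P v] idem Re by simp
    finally have "(P * R) *\<^sub>v e = R *\<^sub>v e" .
    then show "(P * R) $$ (i,j) = R $$ (i,j)"
      using mult_unit_vec_index[OF mult_carrier_mat[OF P R] i j] mult_unit_vec_index[OF R i j]
      unfolding e_def by simp
  qed (use P R in auto)
qed

section \<open>Measure-and-prepare channels\<close>

lemma sum_blocks: "(\<Sum>i<k*m. (g::nat \<Rightarrow> 'a::comm_monoid_add) i) = (\<Sum>a<k. \<Sum>r<m. g (a*m + r))"
proof -
  have "(\<Sum>i\<in>{a*m..<a*m+m}. g i) = (\<Sum>r<m. g (a*m + r))" for a
    using sum.shift_bounds_nat_ivl[of g 0 "a*m" m] by (simp add: add.commute atLeast0LessThan)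
  then show ?thesis using sum.nat_group[of "\<lambda>i. g i" m k] by simp
qed

lemma quad_form_blocks:
  "quad_form (k*m) A v =
   (\<Sum>a<k. \<Sum>r<m. \<Sum>b<k. \<Sum>s<m. cnj (v (a*m+r)) * A $$ (a*m+r, b*m+s) * v (b*m+s))"
  unfolding quad_form_def sesq_form_def sum_blocks ..

lemma block_index_less: "a < k \<Longrightarrow> r < (m::nat) \<Longrightarrow> a*m + r < k*m"
proof -
  assume "a < k" "r < m"
  then have "a*m + r < Suc a * m" by simp
  also have "\<dots> \<le> k * m" using \<open>a < k\<close> by (intro mult_right_mono) auto
  finally show ?thesis .
qed

lemma psd_kronecker:
  assumes T: "psd k T" and S: "psd m S"
  shows "psd (k*m) (mat (k*m) (k*m) (\<lambda>(i,j). T $$ (i div m, j div m) * S $$ (i mod m, j mod m)))"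
    (is "psd _ ?K")
proof -
  obtain N h where S_eq: "S = outer_sum m N h" using psd_eq_outer_sum[OF S] by blast
  have "0 \<le> quad_form (k*m) ?K v" for v
  proof -
    define u where "u = (\<lambda>q a. \<Sum>s<m. cnj (h q s) * v (a*m + s))"
    have "quad_form (k*m) ?K v = (\<Sum>a<k. \<Sum>r<m. \<Sum>b<k. \<Sum>s<m.
         cnj (v (a*m+r)) * (T $$ (a,b) * (\<Sum>q<N. h q r * cnj (h q s))) * v (b*m+s))"
      unfolding quad_form_blocks S_eq
      by (intro sum.cong refl) (auto simp: block_index_less outer_sum_def)
    also have "\<dots> = (\<Sum>q<N. \<Sum>a<k. \<Sum>b<k. cnj (u q a) * T $$ (a,b) * u q b)"
      unfolding u_def
      by (simp add: sum_distrib_left sum_distrib_right mult_ac sum.swap[of _ "{..<N}"]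
          sum.swap[of _ "{..<m}" "{..<k}"])
    also have "\<dots> = (\<Sum>q<N. quad_form k T (u q))" unfolding quad_form_def sesq_form_def ..
    finally show ?thesis using T psd_iff_quad_form by (auto intro!: sum_nonneg)
  qed
  then show ?thesis unfolding psd_iff_quad_form by simp
qed

lemma blk_carrier [simp]: "blk n X a b \<in> carrier_mat n n"
  by (simp add: blk_def)

lemma psd_hs_blocks:
  assumes W: "psd n W" and X: "psd (k*n) X"
  shows "psd k (mat k k (\<lambda>(a,b). hs W (blk n X a b)))" (is "psd _ ?T")
proof -
  obtain N g where W_eq: "W = outer_sum n N g" using psd_eq_outer_sum[OF W] by blast
  have "0 \<le> quad_form k ?T y" for y
  proof -
    define w where "w = (\<lambda>p i. y (i div n) * g p (i mod n))"
    have hsW: "hs W (blk n X a b) = (\<Sum>c<n. \<Sum>d<n. (\<Sum>p<N. g p c * cnj (g p d)) * X $$ (a*n+d, b*n+c))"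
      for a b
      unfolding hs_eq_sum[OF psd_carrier[OF W] blk_carrier]
      by (intro sum.cong refl) (simp add: W_eq outer_sum_def blk_def)
    have "quad_form k ?T y = (\<Sum>a<k. \<Sum>b<k. cnj (y a) *
        (\<Sum>c<n. \<Sum>d<n. (\<Sum>p<N. g p c * cnj (g p d)) * X $$ (a*n+d, b*n+c)) * y b)"
      unfolding quad_form_def sesq_form_def by (intro sum.cong refl) (simp add: hsW)
    also have "\<dots> = (\<Sum>p<N. \<Sum>c<n. \<Sum>d<n. \<Sum>a<k. \<Sum>b<k.
         cnj (y a) * g p c * cnj (g p d) * X $$ (a*n+d, b*n+c) * y b)"
      by (simp add: sum_distrib_left sum_distrib_right mult_ac sum.swap[of _ "{..<N}"]
          sum.swap[of _ "{..<k}" "{..<n}"])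
    also have "\<dots> = (\<Sum>p<N. \<Sum>d<n. \<Sum>c<n. \<Sum>a<k. \<Sum>b<k.
         cnj (y a) * g p c * cnj (g p d) * X $$ (a*n+d, b*n+c) * y b)"
      by (intro sum.cong refl sum.swap)
    also have "\<dots> = (\<Sum>p<N. quad_form (k*n) X (w p))"
      unfolding quad_form_blocks
      by (rule sum.cong[OF refl])
         (simp add: w_def sum_distrib_left sum_distrib_right mult_ac sum.swap[of _ "{..<k}" "{..<n}"])
    finally show ?thesis using X psd_iff_quad_form by (auto intro!: sum_nonneg)
  qed
  then show ?thesis unfolding psd_iff_quad_form by simp
qed

definition meas_prep :: "complex mat \<Rightarrow> complex mat \<Rightarrow> complex mat \<Rightarrow> complex mat \<Rightarrow> complex mat \<Rightarrow> complex mat" where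
  "meas_prep W S V T X = hs W X \<cdot>\<^sub>m S + hs V X \<cdot>\<^sub>m T"

lemma meas_prep_carrier:
  "S \<in> carrier_mat m m \<Longrightarrow> T \<in> carrier_mat m m \<Longrightarrow> meas_prep W S V T X \<in> carrier_mat m m"
  unfolding meas_prep_def by simp

lemma index_meas_prep:
  "S \<in> carrier_mat m m \<Longrightarrow> T \<in> carrier_mat m m \<Longrightarrow> i < m \<Longrightarrow> j < m \<Longrightarrow>
   meas_prep W S V T X $$ (i,j) = hs W X * S $$ (i,j) + hs V X * T $$ (i,j)"
  unfolding meas_prep_def by simp

lemma lin_map_meas_prep:
  assumes W: "W \<in> carrier_mat n n" and V: "V \<in> carrier_mat n n"
    and S: "S \<in> carrier_mat m m" and T: "T \<in> carrier_mat m m"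
  shows "lin_map n m (meas_prep W S V T)"
  unfolding lin_map_def
proof (intro conjI ballI allI)
  fix X :: "complex mat" assume "X \<in> carrier_mat n n"
  show "meas_prep W S V T X \<in> carrier_mat m m" using meas_prep_carrier[OF S T] .
next
  fix X Y :: "complex mat" assume X: "X \<in> carrier_mat n n" and Y: "Y \<in> carrier_mat n n"
  show "meas_prep W S V T (X + Y) = meas_prep W S V T X + meas_prep W S V T Y"
    by (rule eq_matI) (use S T X Y W V in \<open>auto simp: hs_add_right algebra_simps meas_prep_def\<close>)
next
  fix X :: "complex mat" and c :: complex assume X: "X \<in> carrier_mat n n"
  show "meas_prep W S V T (c \<cdot>\<^sub>m X) = c \<cdot>\<^sub>m meas_prep W S V T X"
    by (rule eq_matI) (use S T X W V in \<open>auto simp: hs_smult_right algebra_simps meas_prep_def\<close>)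
qed

text \<open>Complete positivity: on block matrices the channel acts as a sum of two Kronecker
  products of positive semidefinite matrices.\<close>

lemma ampl_meas_prep_psd:
  assumes W: "psd n W" and V: "psd n V" and S: "psd m S" and T: "psd m T" and X: "psd (k*n) X"
  shows "psd (k*m) (ampl k n m (meas_prep W S V T) X)"
proof -
  let ?K = "\<lambda>W S. mat (k*m) (k*m) (\<lambda>(i,j).
    mat k k (\<lambda>(a,b). hs W (blk n X a b)) $$ (i div m, j div m) * S $$ (i mod m, j mod m))"
  have Sc: "S \<in> carrier_mat m m" and Tc: "T \<in> carrier_mat m m" using S T psd_carrier by auto
  have "ampl k n m (meas_prep W S V T) X = ?K W S + ?K V T"
  proof (rule eq_matI)
    fix i j assume "i < dim_row (?K W S + ?K V T)" "j < dim_col (?K W S + ?K V T)"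
    then have i: "i < k*m" and j: "j < k*m" by auto
    then have "m > 0" by (cases m) auto
    moreover have "i div m < k" "j div m < k" using i j by (auto simp: less_mult_imp_div_less)
    ultimately show "ampl k n m (meas_prep W S V T) X $$ (i,j) = (?K W S + ?K V T) $$ (i,j)"
      unfolding ampl_def using i j by (simp add: index_meas_prep[OF Sc Tc])
  qed (auto simp: ampl_def)
  then show ?thesis
    using psd_add[OF psd_kronecker[OF psd_hs_blocks[OF W X] S] psd_kronecker[OF psd_hs_blocks[OF V X] T]]
    by simp
qed

lemma mtrace_meas_prep:
  assumes S: "S \<in> carrier_mat m m" and T: "T \<in> carrier_mat m m"
  shows "mtrace (meas_prep W S V T X) = hs W X * mtrace S + hs V X * mtrace T"
  unfolding mtrace_eq_sum[OF meas_prep_carrier[OF S T]] mtrace_eq_sum[OF S] mtrace_eq_sum[OF T]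
  by (simp add: index_meas_prep[OF S T] sum.distrib sum_distrib_left)

lemma CPTNI_meas_prep:
  assumes W: "psd n W" and ZW: "psd n (Z - W)" and ZI: "psd n (1\<^sub>m n - Z)" and Z: "Z \<in> carrier_mat n n"
    and S: "density m S" and T: "density m T"
  shows "CPTNI n m (meas_prep W S (Z - W) T)"
  unfolding CPTNI_def
proof (intro conjI allI impI)
  have Wc: "W \<in> carrier_mat n n" using psd_carrier[OF W] .
  show "lin_map n m (meas_prep W S (Z - W) T)"
    using lin_map_meas_prep[OF Wc _ density_carrier[OF S] density_carrier[OF T]] Z Wc
    by (simp add: minus_carrier_mat)
  show "psd (k*m) (ampl k n m (meas_prep W S (Z - W) T) X)" if "psd (k*n) X" for k X
    using ampl_meas_prep_psd[OF W ZW density_psd[OF S] density_psd[OF T] that] .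
  fix X assume X: "psd n X"
  have Xc: "X \<in> carrier_mat n n" using psd_carrier[OF X] .
  have "mtrace (meas_prep W S (Z - W) T X) = hs Z X"
    using mtrace_meas_prep[OF density_carrier[OF S] density_carrier[OF T]] S T hs_diff_left[OF Z Wc Xc]
    by (simp add: density_def)
  moreover have "0 \<le> hs (1\<^sub>m n - Z) X" by (rule hs_psd_nonneg[OF ZI X])
  moreover have "hs (1\<^sub>m n - Z) X = mtrace X - hs Z X"
    using hs_diff_left[OF one_carrier_mat Z Xc] hs_one_left[OF Xc] by simp
  ultimately show "Re (mtrace (meas_prep W S (Z - W) T X)) \<le> Re (mtrace X)"
    by (simp add: less_eq_complex_def)
qed

section \<open>The adjoint of a linear map\<close>

definition mat_unit :: "nat \<Rightarrow> nat \<Rightarrow> nat \<Rightarrow> complex mat" where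
  "mat_unit n i j = mat n n (\<lambda>(a,b). if a = i \<and> b = j then 1 else 0)"

definition mat_comb :: "nat \<Rightarrow> (nat \<times> nat) set \<Rightarrow> (nat \<times> nat \<Rightarrow> complex) \<Rightarrow> complex mat" where
  "mat_comb n S c = mat n n (\<lambda>(a,b). \<Sum>x\<in>S. c x * mat_unit n (fst x) (snd x) $$ (a,b))"

definition dual_map :: "nat \<Rightarrow> (complex mat \<Rightarrow> complex mat) \<Rightarrow> complex mat \<Rightarrow> complex mat" where
  "dual_map n E Y = mat n n (\<lambda>(j,i). hs Y (E (mat_unit n i j)))"

lemma mat_unit_carrier [simp]: "mat_unit n i j \<in> carrier_mat n n"
  by (simp add: mat_unit_def)

lemma mat_comb_carrier [simp]: "mat_comb n S c \<in> carrier_mat n n"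
  by (simp add: mat_comb_def)

lemma dual_map_carrier [simp]: "dual_map n E Y \<in> carrier_mat n n"
  by (simp add: dual_map_def)

lemma lin_map_carrier: "lin_map n m E \<Longrightarrow> X \<in> carrier_mat n n \<Longrightarrow> E X \<in> carrier_mat m m"
  unfolding lin_map_def by blast

lemma lin_map_zero:
  assumes "lin_map n m E"
  shows "E (0\<^sub>m n n) = 0\<^sub>m m m"
proof -
  have "0\<^sub>m n n = (0::complex) \<cdot>\<^sub>m 0\<^sub>m n n" by (rule eq_matI) auto
  then have "E (0\<^sub>m n n) = 0 \<cdot>\<^sub>m E (0\<^sub>m n n)" using assms unfolding lin_map_def by (metis zero_carrier_mat)
  also have "\<dots> = 0\<^sub>m m m" by (rule eq_matI) (use lin_map_carrier[OF assms zero_carrier_mat] in auto)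
  finally show ?thesis .
qed

lemma index_lin_map_mat_comb:
  assumes lin: "lin_map n m E" and fin: "finite S" and ab: "a < m" "b < m"
  shows "E (mat_comb n S c) $$ (a,b) = (\<Sum>x\<in>S. c x * E (mat_unit n (fst x) (snd x)) $$ (a,b))"
  using fin
proof (induction S rule: finite_induct)
  case empty
  have "mat_comb n {} c = 0\<^sub>m n n" by (rule eq_matI) (auto simp: mat_comb_def)
  then show ?case using lin_map_zero[OF lin] ab by simp
next
  case (insert x S)
  have "mat_comb n (insert x S) c = c x \<cdot>\<^sub>m mat_unit n (fst x) (snd x) + mat_comb n S c"
    by (rule eq_matI) (use insert.hyps in \<open>auto simp: mat_comb_def mat_unit_def\<close>)
  then have "E (mat_comb n (insert x S) c) = c x \<cdot>\<^sub>m E (mat_unit n (fst x) (snd x)) + E (mat_comb n S c)"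
    using lin unfolding lin_map_def by (metis mat_unit_carrier mat_comb_carrier smult_carrier_mat)
  then show ?case
    using insert ab lin_map_carrier[OF lin mat_unit_carrier, of "fst x" "snd x"]
      lin_map_carrier[OF lin mat_comb_carrier, of S c] by simp
qed

lemma mat_eq_mat_comb:
  assumes X: "X \<in> carrier_mat n n"
  shows "X = mat_comb n ({..<n} \<times> {..<n}) (\<lambda>x. X $$ x)"
proof (rule eq_matI)
  fix a b assume "a < dim_row (mat_comb n ({..<n} \<times> {..<n}) (\<lambda>x. X $$ x))"
    "b < dim_col (mat_comb n ({..<n} \<times> {..<n}) (\<lambda>x. X $$ x))"
  then have a: "a < n" and b: "b < n" by (auto simp: mat_comb_def)
  have "(\<Sum>x\<in>{..<n} \<times> {..<n}. X $$ x * mat_unit n (fst x) (snd x) $$ (a,b))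
      = (\<Sum>x\<in>{..<n} \<times> {..<n}. if x = (a,b) then X $$ x else 0)"
    by (rule sum.cong) (use a b in \<open>auto simp: mat_unit_def\<close>)
  also have "\<dots> = X $$ (a,b)" using a b by simp
  finally show "X $$ (a,b) = mat_comb n ({..<n} \<times> {..<n}) (\<lambda>x. X $$ x) $$ (a,b)"
    using a b by (simp add: mat_comb_def)
qed (use X in \<open>auto simp: mat_comb_def\<close>)

lemma hs_dual_map:
  assumes lin: "lin_map n m E" and X: "X \<in> carrier_mat n n" and Y: "Y \<in> carrier_mat m m"
  shows "hs (dual_map n E Y) X = hs Y (E X)"
proof -
  let ?E = "\<lambda>x. E (mat_unit n (fst x) (snd x))"
  have "E X = E (mat_comb n ({..<n} \<times> {..<n}) (\<lambda>x. X $$ x))"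
    using mat_eq_mat_comb[OF X] by (rule arg_cong)
  then have EX: "E X $$ (b,a) = (\<Sum>x\<in>{..<n} \<times> {..<n}. X $$ x * ?E x $$ (b,a))" if "a < m" "b < m" for a b
    using index_lin_map_mat_comb[OF lin _ that(2,1), where S = "{..<n} \<times> {..<n}"] by simp
  have "hs Y (E X) = (\<Sum>a<m. \<Sum>b<m. Y $$ (a,b) * E X $$ (b,a))"
    by (rule hs_eq_sum[OF Y lin_map_carrier[OF lin X]])
  also have "\<dots> = (\<Sum>a<m. \<Sum>b<m. \<Sum>x\<in>{..<n} \<times> {..<n}. X $$ x * (Y $$ (a,b) * ?E x $$ (b,a)))"
    by (intro sum.cong refl) (simp add: EX sum_distrib_left mult_ac)
  also have "\<dots> = (\<Sum>x\<in>{..<n} \<times> {..<n}. X $$ x * hs Y (?E x))"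
    by (simp add: hs_eq_sum[OF Y lin_map_carrier[OF lin mat_unit_carrier]] sum_distrib_left
        sum.swap[of _ "{..<n} \<times> {..<n}"])
  also have "\<dots> = (\<Sum>i<n. \<Sum>j<n. X $$ (i,j) * hs Y (E (mat_unit n i j)))"
    by (simp add: sum.cartesian_product case_prod_beta)
  also have "\<dots> = (\<Sum>j<n. \<Sum>i<n. dual_map n E Y $$ (j,i) * X $$ (i,j))"
    by (subst sum.swap) (auto simp: dual_map_def mult.commute intro!: sum.cong)
  also have "\<dots> = hs (dual_map n E Y) X" by (rule hs_eq_sum[symmetric, OF dual_map_carrier X])
  finally show ?thesis by simp
qed

lemma dual_map_diff:
  assumes lin: "lin_map n m E" and "Y1 \<in> carrier_mat m m" "Y2 \<in> carrier_mat m m"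
  shows "dual_map n E (Y1 - Y2) = dual_map n E Y1 - dual_map n E Y2"
  by (rule eq_matI)
     (auto simp: dual_map_def hs_diff_left[OF assms(2,3) lin_map_carrier[OF lin mat_unit_carrier]])

lemma ampl_one:
  assumes "E X \<in> carrier_mat m m" "X \<in> carrier_mat n n"
  shows "ampl 1 n m E X = E X"
proof -
  have "blk n X 0 0 = X" by (rule eq_matI) (use assms in \<open>auto simp: blk_def\<close>)
  then show ?thesis by (intro eq_matI) (use assms in \<open>auto simp: ampl_def\<close>)
qed

lemma CPTNI_psd:
  assumes E: "CPTNI n m E" and X: "psd n X"
  shows "psd m (E X)"
proof -
  have lin: "lin_map n m E" and cp: "\<forall>k X. psd (k*n) X \<longrightarrow> psd (k*m) (ampl k n m E X)"
    using E unfolding CPTNI_def by auto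
  have "psd (1*n) X" using X by simp
  then have "psd (1*m) (ampl 1 n m E X)" using cp by blast
  then show ?thesis using ampl_one[of E X m n, OF lin_map_carrier[OF lin psd_carrier[OF X]] psd_carrier[OF X]] by simp
qed

lemma dual_map_psd:
  assumes E: "CPTNI n m E" and Y: "psd m Y"
  shows "psd n (dual_map n E Y)"
  unfolding psd_iff_quad_form
proof (intro conjI allI)
  have lin: "lin_map n m E" using E by (simp add: CPTNI_def)
  fix v
  have "quad_form n (dual_map n E Y) v = hs Y (E (outer_sum n 1 (\<lambda>_. v)))"
    unfolding quad_form_eq_hs[OF dual_map_carrier] by (rule hs_dual_map[OF lin outer_sum_carrier psd_carrier[OF Y]])
  then show "0 \<le> quad_form n (dual_map n E Y) v"
    using hs_psd_nonneg[OF Y CPTNI_psd[OF E outer_sum_psd]] by simp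
qed simp

lemma dual_map_one_compl_psd:
  assumes E: "CPTNI n m E"
  shows "psd n (1\<^sub>m n - dual_map n E (1\<^sub>m m))"
  unfolding psd_iff_quad_form
proof (intro conjI allI)
  have lin: "lin_map n m E" and tni: "\<forall>X. psd n X \<longrightarrow> Re (mtrace (E X)) \<le> Re (mtrace X)"
    using E by (auto simp: CPTNI_def)
  show "1\<^sub>m n - dual_map n E (1\<^sub>m m) \<in> carrier_mat n n" by (simp add: minus_carrier_mat)
  fix v
  let ?G = "outer_sum n 1 (\<lambda>_. v)"
  have EG: "psd m (E ?G)" by (rule CPTNI_psd[OF E outer_sum_psd])
  have "quad_form n (1\<^sub>m n - dual_map n E (1\<^sub>m m)) v
      = quad_form n (1\<^sub>m n) v - quad_form n (dual_map n E (1\<^sub>m m)) v"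
    unfolding quad_form_def by (rule sesq_form_minus_mat) simp_all
  also have "\<dots> = mtrace ?G - mtrace (E ?G)"
    unfolding quad_form_eq_hs[OF one_carrier_mat] quad_form_eq_hs[OF dual_map_carrier]
      hs_dual_map[OF lin outer_sum_carrier one_carrier_mat]
    by (simp add: hs_one_left lin_map_carrier[OF lin])
  finally show "0 \<le> quad_form n (1\<^sub>m n - dual_map n E (1\<^sub>m m)) v"
    using tni outer_sum_psd psd_trace_nonneg[OF EG] psd_trace_nonneg[OF outer_sum_psd]
    by (auto simp: less_eq_complex_def)
qed

definition subnormalised_free :: "complex mat set \<Rightarrow> complex mat \<Rightarrow> bool" where
  "subnormalised_free F X \<longleftrightarrow> (\<exists>\<sigma>\<in>F. \<exists>p::real. 0 \<le> p \<and> p \<le> 1 \<and> X = complex_of_real p \<cdot>\<^sub>m \<sigma>)"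

lemma free_ops_iff:
  "E \<in> free_ops n m F F' \<longleftrightarrow> CPTNI n m E \<and> (\<forall>\<sigma>\<in>F. subnormalised_free F' (E \<sigma>))"
  unfolding free_ops_def subnormalised_free_def by simp

lemma subnormalised_free_smult:
  assumes "\<tau> \<in> F" "0 \<le> p" "p \<le> 1"
  shows "subnormalised_free F (complex_of_real p \<cdot>\<^sub>m \<tau>)"
  unfolding subnormalised_free_def using assms by blast

lemma zero_map_in_free_ops:
  assumes "free_set m F'" "\<tau> \<in> F'"
  shows "(\<lambda>X. 0\<^sub>m m m) \<in> free_ops n m F F'"
  unfolding free_ops_iff CPTNI_def
proof (intro conjI allI impI ballI)
  have "\<tau> \<in> carrier_mat m m" using density_carrier[OF free_set_density[OF assms]] .
  then have "0\<^sub>m m m = complex_of_real 0 \<cdot>\<^sub>m \<tau>" by (intro eq_matI) auto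
  then show "subnormalised_free F' (0\<^sub>m m m)" for \<sigma>
    using subnormalised_free_smult[OF assms(2), of 0] by simp
  show "lin_map n m (\<lambda>X. 0\<^sub>m m m)" unfolding lin_map_def by (auto intro!: eq_matI)
  show "psd (k*m) (ampl k n m (\<lambda>X. 0\<^sub>m m m) X)" for k X
  proof -
    have "ampl k n m (\<lambda>X. 0\<^sub>m m m) X = 0\<^sub>m (k*m) (k*m)"
    proof (rule eq_matI)
      fix i j assume "i < dim_row (0\<^sub>m (k*m) (k*m) :: complex mat)" "j < dim_col (0\<^sub>m (k*m) (k*m) :: complex mat)"
      then have "i < k*m" "j < k*m" "m > 0" by (auto intro: gr0I)
      then show "ampl k n m (\<lambda>X. 0\<^sub>m m m) X $$ (i,j) = 0\<^sub>m (k*m) (k*m) $$ (i,j)"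
        unfolding ampl_def by simp
    qed (auto simp: ampl_def)
    then show ?thesis using psd_zero by simp
  qed
  show "Re (mtrace (0\<^sub>m m m :: complex mat)) \<le> Re (mtrace X)" if "psd n X" for X
    using psd_trace_nonneg[OF that] by (simp add: mtrace_eq_sum[of _ m] less_eq_complex_def)
qed

lemma Ptrans_set_bdd:
  assumes "density n \<rho>" "density m \<rho>'"
  shows "bdd_above {p. \<exists>E\<in>free_ops n m F F'. E \<rho> = complex_of_real p \<cdot>\<^sub>m \<rho>'}"
proof (rule bdd_aboveI[of _ 1], clarify)
  fix p E assume E: "E \<in> free_ops n m F F'" and E\<rho>: "E \<rho> = complex_of_real p \<cdot>\<^sub>m \<rho>'"
  have "Re (mtrace (E \<rho>)) \<le> Re (mtrace \<rho>)"
    using E density_psd[OF assms(1)] unfolding free_ops_def CPTNI_def by blast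
  moreover have "mtrace (E \<rho>) = complex_of_real p"
    unfolding E\<rho> mtrace_smult[OF density_carrier[OF assms(2)]] using assms(2) by (simp add: density_def)
  ultimately show "p \<le> 1" using assms(1) by (simp add: density_def)
qed

lemma le_Ptrans:
  assumes "density n \<rho>" "density m \<rho>'"
    and "E \<in> free_ops n m F F'" "E \<rho> = complex_of_real p \<cdot>\<^sub>m \<rho>'"
  shows "p \<le> Ptrans n m F F' \<rho> \<rho>'"
  unfolding Ptrans_def by (rule cSup_upper[OF _ Ptrans_set_bdd[OF assms(1,2)]]) (use assms in blast)

lemma Ptrans_le:
  assumes "free_set m F'" "F' \<noteq> {}" "density m \<rho>'"
    and bound: "\<And>E p. E \<in> free_ops n m F F' \<Longrightarrow> E \<rho> = complex_of_real p \<cdot>\<^sub>m \<rho>' \<Longrightarrow> p \<le> c"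
  shows "Ptrans n m F F' \<rho> \<rho>' \<le> c"
  unfolding Ptrans_def
proof (rule cSup_least)
  obtain \<tau> where "\<tau> \<in> F'" using assms(2) by blast
  moreover have "0\<^sub>m m m = complex_of_real 0 \<cdot>\<^sub>m \<rho>'"
    by (rule eq_matI) (use density_carrier[OF assms(3)] in auto)
  ultimately show "{p. \<exists>E\<in>free_ops n m F F'. E \<rho> = complex_of_real p \<cdot>\<^sub>m \<rho>'} \<noteq> {}"
    using zero_map_in_free_ops[OF assms(1)] by fastforce
qed (use bound in blast)

lemma Hfeas_psd:
  assumes "Hfeas n F \<rho> t W Z"
  shows "psd n W" "psd n (Z - W)" "psd n (1\<^sub>m n - Z)" "W \<in> carrier_mat n n" "Z \<in> carrier_mat n n"
proof -
  have "W - 0\<^sub>m n n = W" if "W \<in> carrier_mat n n" by (rule eq_matI) (use that in auto)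
  then show "psd n W" "psd n (Z - W)" "psd n (1\<^sub>m n - Z)" "W \<in> carrier_mat n n" "Z \<in> carrier_mat n n"
    using assms unfolding Hfeas_def loewner_le_def by auto
qed

lemma HfeasI:
  assumes "psd n W" "psd n (Z - W)" "psd n (1\<^sub>m n - Z)" "Z \<in> carrier_mat n n" "hs W \<rho> = hs Z \<rho>"
    "\<And>\<sigma>. \<sigma> \<in> F \<Longrightarrow> ereal (Re (hs W \<sigma>)) \<le> einv t * ereal (Re (hs Z \<sigma>))"
  shows "Hfeas n F \<rho> t W Z"
proof -
  have "W - 0\<^sub>m n n = W" by (rule eq_matI) (use psd_carrier[OF assms(1)] in auto)
  then show ?thesis unfolding Hfeas_def loewner_le_def
    using assms psd_carrier[OF assms(1)] by (auto simp: minus_carrier_mat)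
qed

lemma Hfeas_zero:
  assumes "\<forall>\<sigma>\<in>F. \<sigma> \<in> carrier_mat n n"
  shows "Hfeas n F \<rho> t (0\<^sub>m n n) (0\<^sub>m n n)"
proof -
  have zero: "0\<^sub>m n n - 0\<^sub>m n n = (0\<^sub>m n n :: complex mat)" and one: "1\<^sub>m n - 0\<^sub>m n n = (1\<^sub>m n :: complex mat)"
    by (auto intro!: eq_matI)
  have "psd n (0\<^sub>m n n - 0\<^sub>m n n)" and "psd n (1\<^sub>m n - 0\<^sub>m n n)"
    unfolding zero one by (rule psd_zero psd_one)+
  then show ?thesis unfolding Hfeas_def loewner_le_def
    using assms by (auto simp: hs_zero_left zero_ereal_def[symmetric])
qed

lemma Hval_set_bdd:
  assumes "density n \<rho>"
  shows "bdd_above {Re (hs \<rho> W) | W Z. Hfeas n F \<rho> t W Z}"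
proof (rule bdd_aboveI[of _ 1], clarify)
  fix W Z assume h: "Hfeas n F \<rho> t W Z"
  have "hs \<rho> W = hs Z \<rho>"
    using hs_comm[OF density_carrier[OF assms] Hfeas_psd(4)[OF h]] h by (simp add: Hfeas_def)
  then show "Re (hs \<rho> W) \<le> 1" using hs_density_le_one[OF Hfeas_psd(5,3)[OF h] assms] by simp
qed

lemma le_Hval:
  assumes "density n \<rho>" "Hfeas n F \<rho> t W Z"
  shows "Re (hs \<rho> W) \<le> Hval n F \<rho> t"
  unfolding Hval_def by (rule cSup_upper[OF _ Hval_set_bdd[OF assms(1)]]) (use assms in blast)

lemma Hval_le:
  assumes "free_set n F" and bound: "\<And>W Z. Hfeas n F \<rho> t W Z \<Longrightarrow> Re (hs \<rho> W) \<le> c"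
  shows "Hval n F \<rho> t \<le> c"
  unfolding Hval_def
proof (rule cSup_least)
  show "{Re (hs \<rho> W) | W Z. Hfeas n F \<rho> t W Z} \<noteq> {}"
    using Hfeas_zero density_carrier free_set_density[OF assms(1)] by blast
qed (use bound in blast)

lemma hs_supp_proj_bounds:
  assumes "free_set m F'" "density m \<rho>'" "\<sigma> \<in> F'"
  shows "0 \<le> Re (hs (supp_proj m \<rho>') \<sigma>)" "Re (hs (supp_proj m \<rho>') \<sigma>) \<le> VF m F' \<rho>'"
proof -
  let ?P = "supp_proj m \<rho>'"
  have proj: "is_supp_proj m \<rho>' ?P" by (rule is_supp_proj_supp_proj[OF density_carrier[OF assms(2)]])
  have P: "?P \<in> carrier_mat m m" using proj unfolding is_supp_proj_def by blast
  have "bdd_above ((\<lambda>\<sigma>. Re (hs ?P \<sigma>)) ` F')"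
    using hs_density_le_one[OF P is_supp_proj_compl_psd[OF proj]] free_set_density[OF assms(1)]
    by (intro bdd_aboveI[of _ 1]) auto
  then show "Re (hs ?P \<sigma>) \<le> VF m F' \<rho>'" unfolding VF_def by (rule cSUP_upper[OF assms(3)])
  show "0 \<le> Re (hs ?P \<sigma>)"
    using hs_psd_nonneg[OF is_supp_proj_psd[OF proj] density_psd[OF free_set_density[OF assms(1,3)]]]
    by (simp add: less_eq_complex_def)
qed

section \<open>Attainment of the robustness\<close>

lemma cone_le_decomp:
  assumes F': "free_set m F'" and \<sigma>: "\<sigma> \<in> F'" and \<rho>': "density m \<rho>'"
    and le: "cone_le F' \<rho>' (complex_of_real l \<cdot>\<^sub>m \<sigma>)"
  shows "1 \<le> l \<and> (\<exists>\<tau>\<in>F'. \<rho>' = complex_of_real l \<cdot>\<^sub>m \<sigma> - complex_of_real (l - 1) \<cdot>\<^sub>m \<tau>)"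
proof -
  obtain \<mu> \<tau> where \<mu>: "0 \<le> \<mu>" and \<tau>: "\<tau> \<in> F'"
    and eq: "complex_of_real l \<cdot>\<^sub>m \<sigma> - \<rho>' = complex_of_real \<mu> \<cdot>\<^sub>m \<tau>"
    using le unfolding cone_le_def mcone_def by blast
  have d\<sigma>: "density m \<sigma>" and d\<tau>: "density m \<tau>" using free_set_density[OF F'] \<sigma> \<tau> by auto
  have c: "\<sigma> \<in> carrier_mat m m" "\<tau> \<in> carrier_mat m m" "\<rho>' \<in> carrier_mat m m"
    using density_carrier d\<sigma> d\<tau> \<rho>' by auto
  have entry: "complex_of_real l * \<sigma> $$ (i,j) - \<rho>' $$ (i,j) = complex_of_real \<mu> * \<tau> $$ (i,j)"
    if "i < m" "j < m" for i j
    using arg_cong[OF eq, of "\<lambda>A. A $$ (i,j)"] that c by simp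
  have "complex_of_real l * mtrace \<sigma> - mtrace \<rho>' = complex_of_real \<mu> * mtrace \<tau>"
    unfolding mtrace_eq_sum[OF c(1)] mtrace_eq_sum[OF c(2)] mtrace_eq_sum[OF c(3)]
    by (simp add: sum_distrib_left sum_subtractf[symmetric] entry)
  then have "complex_of_real (l - 1) = complex_of_real \<mu>" using d\<sigma> d\<tau> \<rho>' by (simp add: density_def)
  then have l: "l - 1 = \<mu>" by (simp only: of_real_eq_iff)
  have "\<rho>' = complex_of_real l \<cdot>\<^sub>m \<sigma> - complex_of_real (l - 1) \<cdot>\<^sub>m \<tau>"
    by (rule eq_matI) (use c entry l in \<open>auto simp: algebra_simps\<close>)
  then show ?thesis using l \<mu> \<tau> by auto
qed

lemma RFF_ge_one:
  assumes "free_set m F'" "density m \<rho>'"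
  shows "1 \<le> RFF F' \<rho>'"
proof -
  have "1 \<le> Rmax F' \<rho>' \<sigma>" if "\<sigma> \<in> F'" for \<sigma>
    unfolding Rmax_def by (rule Inf_greatest) (use cone_le_decomp[OF assms(1) that assms(2)] in auto)
  then show ?thesis unfolding RFF_def by (auto intro: Inf_greatest)
qed

lemma RFF_near_decomp:
  assumes F': "free_set m F'" and \<rho>': "density m \<rho>'" and R: "RFF F' \<rho>' = ereal R" and b: "R < b"
  shows "\<exists>\<sigma>\<in>F'. \<exists>\<tau>\<in>F'. \<exists>l. R \<le> l \<and> l < b \<and>
    \<rho>' = complex_of_real l \<cdot>\<^sub>m \<sigma> - complex_of_real (l - 1) \<cdot>\<^sub>m \<tau>"
proof -
  have "RFF F' \<rho>' < ereal b" using R b by simp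
  then obtain \<sigma> where \<sigma>: "\<sigma> \<in> F'" and "Rmax F' \<rho>' \<sigma> < ereal b"
    unfolding RFF_def by (auto simp: Inf_less_iff)
  then obtain l where le: "cone_le F' \<rho>' (complex_of_real l \<cdot>\<^sub>m \<sigma>)" and "l < b"
    unfolding Rmax_def by (auto simp: Inf_less_iff)
  moreover have "ereal R \<le> ereal l"
  proof -
    have "RFF F' \<rho>' \<le> Rmax F' \<rho>' \<sigma>" unfolding RFF_def by (rule Inf_lower) (use \<sigma> in blast)
    also have "Rmax F' \<rho>' \<sigma> \<le> ereal l" unfolding Rmax_def by (rule Inf_lower) (use le in blast)
    finally show ?thesis unfolding R .
  qed
  ultimately show ?thesis using \<sigma> cone_le_decomp[OF F' \<sigma> \<rho>' le] by auto
qed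

lemma psd_entry_le_diag:
  assumes A: "psd m A" and i: "i < m" and j: "j < m"
  shows "cmod (A $$ (i,j)) \<le> (Re (A $$ (i,i)) + Re (A $$ (j,j))) / 2"
proof -
  obtain N f where A_eq: "A = outer_sum m N f" using psd_eq_outer_sum[OF A] by blast
  have diag: "Re (A $$ (l,l)) = (\<Sum>r<N. (cmod (f r l))^2)" if "l < m" for l
    using that unfolding A_eq outer_sum_def by (simp add: complex_mult_cnj cmod_def power2_eq_square)
  have "cmod (A $$ (i,j)) = cmod (\<Sum>r<N. f r i * cnj (f r j))"
    unfolding A_eq outer_sum_def using i j by simp
  also have "\<dots> \<le> (\<Sum>r<N. cmod (f r i) * cmod (f r j))"
    by (rule order_trans[OF norm_sum]) (simp add: norm_mult)
  also have "\<dots> \<le> (\<Sum>r<N. ((cmod (f r i))^2 + (cmod (f r j))^2) / 2)"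
  proof (rule sum_mono)
    fix r
    have "0 \<le> (cmod (f r i) - cmod (f r j))^2" by simp
    then show "cmod (f r i) * cmod (f r j) \<le> ((cmod (f r i))^2 + (cmod (f r j))^2) / 2"
      by (simp add: power2_eq_square algebra_simps)
  qed
  also have "\<dots> = (Re (A $$ (i,i)) + Re (A $$ (j,j))) / 2"
    by (simp add: diag[OF i] diag[OF j] sum.distrib sum_divide_distrib[symmetric])
  finally show ?thesis .
qed

lemma density_entry_le_one:
  assumes \<rho>: "density m \<rho>" and i: "i < m" and j: "j < m"
  shows "cmod (\<rho> $$ (i,j)) \<le> 1"
proof -
  have diag_le: "Re (\<rho> $$ (l,l)) \<le> 1" if "l < m" for l
  proof -
    have "Re (\<rho> $$ (l,l)) \<le> (\<Sum>l<m. Re (\<rho> $$ (l,l)))"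
      using psd_diag_nonneg[OF density_psd[OF \<rho>]] that
      by (intro member_le_sum) (auto simp: less_eq_complex_def)
    also have "\<dots> = Re (mtrace \<rho>)" by (simp add: mtrace_eq_sum[OF density_carrier[OF \<rho>]])
    also have "\<dots> = 1" using \<rho> by (simp add: density_def)
    finally show ?thesis .
  qed
  show ?thesis using psd_entry_le_diag[OF density_psd[OF \<rho>] i j] diag_le[OF i] diag_le[OF j] by simp
qed

lemma bounded_convergent_subseq:
  fixes x :: "nat \<Rightarrow> 'a \<Rightarrow> real"
  assumes "finite I" and "\<And>i k. i \<in> I \<Longrightarrow> \<bar>x k i\<bar> \<le> B"
  shows "\<exists>r L. strict_mono r \<and> (\<forall>i\<in>I. (\<lambda>k. x (r k) i) \<longlonglongrightarrow> L i)"
  using assms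
proof (induction I rule: finite_induct)
  case empty
  show ?case by (rule exI[of _ id]) (auto simp: strict_mono_def)
next
  case (insert a I)
  then obtain r L where r: "strict_mono r" and L: "\<forall>i\<in>I. (\<lambda>k. x (r k) i) \<longlonglongrightarrow> L i" by auto
  obtain r' where r': "strict_mono r'" and mono: "monoseq (\<lambda>k. x (r (r' k)) a)"
    using seq_monosub[of "\<lambda>k. x (r k) a"] by blast
  have "Bseq (\<lambda>k. x (r (r' k)) a)" using insert.prems by (intro BseqI'[of _ B]) simp
  then obtain la where la: "(\<lambda>k. x (r (r' k)) a) \<longlonglongrightarrow> la"
    using Bseq_monoseq_convergent[OF _ mono] by (auto simp: convergent_def)
  have "(\<lambda>k. x ((r \<circ> r') k) i) \<longlonglongrightarrow> (L(a := la)) i" if "i \<in> insert a I" for i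
  proof (cases "i = a")
    case False
    then have "((\<lambda>k. x (r k) i) \<circ> r') \<longlonglongrightarrow> L i" using LIMSEQ_subseq_LIMSEQ[OF _ r'] L that by blast
    then show ?thesis using False by (simp add: o_def)
  qed (use la in simp)
  then show ?case using strict_mono_o[OF r r'] by blast
qed

lemma mat_closedD:
  assumes "mat_closed n S" "\<And>k. X k \<in> S" "A \<in> carrier_mat n n"
    "\<And>i j. i < n \<Longrightarrow> j < n \<Longrightarrow> (\<lambda>k. X k $$ (i,j)) \<longlonglongrightarrow> A $$ (i,j)"
  shows "A \<in> S"
  using assms unfolding mat_closed_def by blast

lemma free_set_convergent_subseq:
  fixes X :: "nat \<Rightarrow> complex mat"
  assumes F: "free_set m F" and X: "\<And>k. X k \<in> F"
  obtains r A where "strict_mono r" "A \<in> F"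
    "\<And>i j. i < m \<Longrightarrow> j < m \<Longrightarrow> (\<lambda>k. X (r k) $$ (i,j)) \<longlonglongrightarrow> A $$ (i,j)"
proof -
  define x where "x = (\<lambda>k (i, j, re). (if re then Re else Im) (X k $$ (i,j)))"
  let ?I = "{..<m} \<times> {..<m} \<times> (UNIV :: bool set)"
  have "\<bar>x k idx\<bar> \<le> 1" if "idx \<in> ?I" for idx k
  proof -
    obtain i j re where idx: "idx = (i, j, re)" by (cases idx)
    then have "i < m" "j < m" using that by auto
    then have "cmod (X k $$ (i,j)) \<le> 1" using density_entry_le_one[OF free_set_density[OF F X]] by blast
    then show ?thesis unfolding idx x_def
      using abs_Re_le_cmod[of "X k $$ (i,j)"] abs_Im_le_cmod[of "X k $$ (i,j)"] by auto
  qed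
  then obtain r L where r: "strict_mono r" and L: "\<forall>idx\<in>?I. (\<lambda>k. x (r k) idx) \<longlonglongrightarrow> L idx"
    using bounded_convergent_subseq[of ?I x 1] by auto
  define A where "A = mat m m (\<lambda>(i,j). Complex (L (i,j,True)) (L (i,j,False)))"
  have conv: "(\<lambda>k. X (r k) $$ (i,j)) \<longlonglongrightarrow> A $$ (i,j)" if "i < m" "j < m" for i j
  proof -
    have "(\<lambda>k. Complex (x (r k) (i,j,True)) (x (r k) (i,j,False))) \<longlonglongrightarrow> Complex (L (i,j,True)) (L (i,j,False))"
      by (intro tendsto_Complex) (use L that in auto)
    then show ?thesis using that unfolding A_def x_def by (simp add: complex.collapse)
  qed
  have "mat_closed m F" using F unfolding free_set_def by blast
  then have "A \<in> F"
    by (rule mat_closedD[of m F "\<lambda>k. X (r k)"]) (use X conv in \<open>simp_all add: A_def\<close>)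
  then show ?thesis by (rule that[OF r _ conv])
qed

lemma RFF_near_decomp_seq:
  assumes F': "free_set m F'" and \<rho>': "density m \<rho>'" and R: "RFF F' \<rho>' = ereal R"
  obtains S T L where "\<And>k. S k \<in> F'" "\<And>k. T k \<in> F'" "L \<longlonglongrightarrow> R"
    "\<And>k. \<rho>' = complex_of_real (L k) \<cdot>\<^sub>m S k - complex_of_real (L k - 1) \<cdot>\<^sub>m T k"
proof -
  let ?dec = "\<lambda>(\<sigma>, \<tau>, l). \<rho>' = complex_of_real l \<cdot>\<^sub>m \<sigma> - complex_of_real (l - 1) \<cdot>\<^sub>m \<tau>"
  have "\<forall>k. \<exists>st. st \<in> F' \<times> F' \<times> {R..<R + inverse (real (Suc k))} \<and> ?dec st"
  proof
    fix k
    obtain \<sigma> \<tau> l where "\<sigma> \<in> F'" "\<tau> \<in> F'" "R \<le> l" "l < R + inverse (real (Suc k))"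
      "\<rho>' = complex_of_real l \<cdot>\<^sub>m \<sigma> - complex_of_real (l - 1) \<cdot>\<^sub>m \<tau>"
      using RFF_near_decomp[OF F' \<rho>' R, of "R + inverse (real (Suc k))"] by auto
    then show "\<exists>st. st \<in> F' \<times> F' \<times> {R..<R + inverse (real (Suc k))} \<and> ?dec st"
      by (intro exI[of _ "(\<sigma>, \<tau>, l)"]) simp
  qed
  then have "\<exists>st. \<forall>k. st k \<in> F' \<times> F' \<times> {R..<R + inverse (real (Suc k))} \<and> ?dec (st k)"
    by (rule choice)
  then obtain st where st: "\<forall>k. st k \<in> F' \<times> F' \<times> {R..<R + inverse (real (Suc k))} \<and> ?dec (st k)"
    by blast
  define L where "L = (\<lambda>k. snd (snd (st k)))"
  have L: "R \<le> L k" "L k < R + inverse (real (Suc k))" for k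
    using st unfolding L_def by (auto simp: mem_Times_iff)
  have lim: "L \<longlonglongrightarrow> R"
  proof (rule tendsto_sandwich[of "\<lambda>_. R" _ _ "\<lambda>k. R + inverse (real (Suc k))"])
    show "(\<lambda>k. R + inverse (real (Suc k))) \<longlonglongrightarrow> R"
      using tendsto_add[OF tendsto_const LIMSEQ_inverse_real_of_nat, of R] by simp
    show "\<forall>\<^sub>F k in sequentially. R \<le> L k" using L(1) by simp
    show "\<forall>\<^sub>F k in sequentially. L k \<le> R + inverse (real (Suc k))"
      by (intro always_eventually allI less_imp_le L(2))
  qed simp
  show ?thesis
    by (rule that[of "\<lambda>k. fst (st k)" "\<lambda>k. fst (snd (st k))", OF _ _ lim])
       (use st in \<open>auto simp: case_prod_beta mem_Times_iff L_def\<close>)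
qed

lemma RFF_attained:
  assumes F': "free_set m F'" and \<rho>': "density m \<rho>'" and R: "RFF F' \<rho>' = ereal R"
  shows "\<exists>\<sigma>\<in>F'. \<exists>\<tau>\<in>F'. \<rho>' = complex_of_real R \<cdot>\<^sub>m \<sigma> - complex_of_real (R - 1) \<cdot>\<^sub>m \<tau>"
proof -
  obtain S T L where S: "\<And>k. S k \<in> F'" and T: "\<And>k. T k \<in> F'" and L: "L \<longlonglongrightarrow> R"
    and dec: "\<And>k. \<rho>' = complex_of_real (L k) \<cdot>\<^sub>m S k - complex_of_real (L k - 1) \<cdot>\<^sub>m T k"
    using RFF_near_decomp_seq[OF F' \<rho>' R] by blast
  obtain r \<sigma> where r: "strict_mono r" and \<sigma>: "\<sigma> \<in> F'"
    and S_lim: "\<And>i j. i < m \<Longrightarrow> j < m \<Longrightarrow> (\<lambda>k. S (r k) $$ (i,j)) \<longlonglongrightarrow> \<sigma> $$ (i,j)"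
    using free_set_convergent_subseq[of m F' S, OF F' S] by blast
  obtain r' \<tau> where r': "strict_mono r'" and \<tau>: "\<tau> \<in> F'"
    and T_lim: "\<And>i j. i < m \<Longrightarrow> j < m \<Longrightarrow> (\<lambda>k. T (r (r' k)) $$ (i,j)) \<longlonglongrightarrow> \<tau> $$ (i,j)"
    using free_set_convergent_subseq[of m F' "\<lambda>k. T (r k)", OF F' T] by blast
  have L_lim: "(\<lambda>k. L (r (r' k))) \<longlonglongrightarrow> R"
    using LIMSEQ_subseq_LIMSEQ[OF L strict_mono_o[OF r r']] by (simp add: o_def)
  have c: "\<sigma> \<in> carrier_mat m m" "\<tau> \<in> carrier_mat m m" "\<rho>' \<in> carrier_mat m m"
    "\<And>k. S k \<in> carrier_mat m m" "\<And>k. T k \<in> carrier_mat m m"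
    using density_carrier free_set_density[OF F'] \<sigma> \<tau> \<rho>' S T by auto
  have "\<rho>' $$ (i,j) = complex_of_real R * \<sigma> $$ (i,j) - complex_of_real (R - 1) * \<tau> $$ (i,j)"
    if ij: "i < m" "j < m" for i j
  proof -
    let ?seq = "\<lambda>k. complex_of_real (L (r (r' k))) * S (r (r' k)) $$ (i,j)
      - complex_of_real (L (r (r' k)) - 1) * T (r (r' k)) $$ (i,j)"
    have "((\<lambda>k. S (r k) $$ (i,j)) \<circ> r') \<longlonglongrightarrow> \<sigma> $$ (i,j)"
      using LIMSEQ_subseq_LIMSEQ[OF S_lim[OF ij] r'] .
    then have "?seq \<longlonglongrightarrow> complex_of_real R * \<sigma> $$ (i,j) - complex_of_real (R - 1) * \<tau> $$ (i,j)"
      unfolding o_def by (intro tendsto_intros T_lim[OF ij] L_lim)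
    moreover have "?seq k = \<rho>' $$ (i,j)" for k
      using arg_cong[OF dec[of "r (r' k)"], of "\<lambda>A. A $$ (i,j)"] ij
        c(4,5)[of "r (r' k)", THEN carrier_matD(1)] c(4,5)[of "r (r' k)", THEN carrier_matD(2)] by simp
    ultimately show ?thesis by (simp add: LIMSEQ_const_iff)
  qed
  then have "\<rho>' = complex_of_real R \<cdot>\<^sub>m \<sigma> - complex_of_real (R - 1) \<cdot>\<^sub>m \<tau>"
    by (intro eq_matI) (use c in auto)
  then show ?thesis using \<sigma> \<tau> by blast
qed

section \<open>The two bounds\<close>

lemma einv_einv_bound:
  assumes "0 \<le> q" "0 \<le> x" "x \<le> V"
  shows "ereal (q * x) \<le> einv (einv (ereal V)) * ereal q"
proof (cases "V = 0")
  case True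
  then show ?thesis using assms by (simp add: einv_def zero_ereal_def[symmetric])
next
  case False
  then have "einv (einv (ereal V)) = ereal V" using assms unfolding einv_def by (auto simp: zero_ereal_def)
  moreover have "q * x \<le> V * q" using assms by (metis mult.commute mult_right_mono)
  ultimately show ?thesis by simp
qed

lemma hs_dual_map_smult:
  assumes lin: "lin_map n m E" and X: "X \<in> carrier_mat n n" and \<sigma>: "density m \<sigma>"
    and EX: "E X = complex_of_real q \<cdot>\<^sub>m \<sigma>"
  shows "Y \<in> carrier_mat m m \<Longrightarrow> hs (dual_map n E Y) X = complex_of_real q * hs Y \<sigma>"
    and "hs (dual_map n E (1\<^sub>m m)) X = complex_of_real q"
proof -
  have c: "\<sigma> \<in> carrier_mat m m" by (rule density_carrier[OF \<sigma>])
  have gen: "hs (dual_map n E Y') X = complex_of_real q * hs Y' \<sigma>" if "Y' \<in> carrier_mat m m" for Y'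
    unfolding hs_dual_map[OF lin X that] EX by (rule hs_smult_right[OF c that])
  then show "Y \<in> carrier_mat m m \<Longrightarrow> hs (dual_map n E Y) X = complex_of_real q * hs Y \<sigma>" .
  show "hs (dual_map n E (1\<^sub>m m)) X = complex_of_real q"
    using gen[OF one_carrier_mat] \<sigma> by (simp add: hs_one_left[OF c] density_def)
qed

lemma dual_map_Hfeas:
  assumes F: "free_set n F" and F': "free_set m F'" and \<rho>: "density n \<rho>" and \<rho>': "density m \<rho>'"
    and E: "E \<in> free_ops n m F F'" and E\<rho>: "E \<rho> = complex_of_real p \<cdot>\<^sub>m \<rho>'"
  shows "Hfeas n F \<rho> (einv (ereal (VF m F' \<rho>'))) (dual_map n E (supp_proj m \<rho>')) (dual_map n E (1\<^sub>m m))"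
    and "hs (dual_map n E (supp_proj m \<rho>')) \<rho> = complex_of_real p"
proof -
  let ?P = "supp_proj m \<rho>'"
  let ?W = "dual_map n E ?P" and ?Z = "dual_map n E (1\<^sub>m m)"
  have c: "\<rho> \<in> carrier_mat n n" "\<rho>' \<in> carrier_mat m m" using density_carrier \<rho> \<rho>' by auto
  have proj: "is_supp_proj m \<rho>' ?P" by (rule is_supp_proj_supp_proj[OF c(2)])
  have P: "?P \<in> carrier_mat m m" using proj unfolding is_supp_proj_def by blast
  have cptni: "CPTNI n m E" and image: "\<forall>\<sigma>\<in>F. subnormalised_free F' (E \<sigma>)"
    using E unfolding free_ops_iff by auto
  have lin: "lin_map n m E" using cptni by (simp add: CPTNI_def)
  have "hs ?P \<rho>' = 1" using \<rho>' by (simp add: hs_def is_supp_proj_mult[OF proj c(2)] density_def)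
  then show hsW: "hs ?W \<rho> = complex_of_real p"
    using hs_dual_map_smult(1)[OF lin c(1) \<rho>' E\<rho> P] by simp
  have "?Z - ?W = dual_map n E (1\<^sub>m m - ?P)"
    by (rule dual_map_diff[symmetric, OF lin one_carrier_mat P])
  then have psds: "psd n ?W" "psd n (?Z - ?W)" "psd n (1\<^sub>m n - ?Z)"
    using dual_map_psd[OF cptni] is_supp_proj_psd[OF proj] is_supp_proj_compl_psd[OF proj]
      dual_map_one_compl_psd[OF cptni] by auto
  have "ereal (Re (hs ?W \<sigma>)) \<le> einv (einv (ereal (VF m F' \<rho>'))) * ereal (Re (hs ?Z \<sigma>))"
    if \<sigma>: "\<sigma> \<in> F" for \<sigma>
  proof -
    obtain \<sigma>' q where \<sigma>': "\<sigma>' \<in> F'" and q: "0 \<le> q" "q \<le> 1" and E\<sigma>: "E \<sigma> = complex_of_real q \<cdot>\<^sub>m \<sigma>'"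
      using image \<sigma> unfolding subnormalised_free_def by blast
    note hs_\<sigma> = hs_dual_map_smult[OF lin density_carrier[OF free_set_density[OF F \<sigma>]]
        free_set_density[OF F' \<sigma>'] E\<sigma>]
    show ?thesis
      using einv_einv_bound[OF q(1) hs_supp_proj_bounds[OF F' \<rho>' \<sigma>']] hs_\<sigma>(1)[OF P] hs_\<sigma>(2) by simp
  qed
  then show "Hfeas n F \<rho> (einv (ereal (VF m F' \<rho>'))) ?W ?Z"
    using HfeasI[OF psds dual_map_carrier] hsW hs_dual_map_smult(2)[OF lin c(1) \<rho>' E\<rho>] by simp
qed

lemma free_op_le_Hval:
  assumes F: "free_set n F" and F': "free_set m F'" and \<rho>: "density n \<rho>" and \<rho>': "density m \<rho>'"
    and E: "E \<in> free_ops n m F F'" and E\<rho>: "E \<rho> = complex_of_real p \<cdot>\<^sub>m \<rho>'"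
  shows "p \<le> Hval n F \<rho> (einv (ereal (VF m F' \<rho>')))"
proof -
  have "hs \<rho> (dual_map n E (supp_proj m \<rho>')) = complex_of_real p"
    using dual_map_Hfeas(2)[OF assms] hs_comm[OF density_carrier[OF \<rho>] dual_map_carrier] by simp
  then show ?thesis using le_Hval[OF \<rho> dual_map_Hfeas(1)[OF assms]] by simp
qed

lemma meas_prep_apply_density:
  assumes W: "psd n W" and ZW: "psd n (Z - W)" and ZI: "psd n (1\<^sub>m n - Z)" and Z: "Z \<in> carrier_mat n n"
    and \<sigma>: "density n \<sigma>" and S: "S \<in> carrier_mat m m" and T: "T \<in> carrier_mat m m"
  obtains a b where "0 \<le> a" "0 \<le> b" "a + b \<le> 1" "Re (hs W \<sigma>) = a" "Re (hs Z \<sigma>) = a + b"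
    "meas_prep W S (Z - W) T \<sigma> = complex_of_real a \<cdot>\<^sub>m S + complex_of_real b \<cdot>\<^sub>m T"
proof
  let ?a = "Re (hs W \<sigma>)" and ?b = "Re (hs (Z - W) \<sigma>)"
  have p\<sigma>: "psd n \<sigma>" and c\<sigma>: "\<sigma> \<in> carrier_mat n n" using density_psd density_carrier \<sigma> by auto
  show "0 \<le> ?a" "0 \<le> ?b"
    using hs_psd_nonneg[OF W p\<sigma>] hs_psd_nonneg[OF ZW p\<sigma>] by (auto simp: less_eq_complex_def)
  show sum: "Re (hs Z \<sigma>) = ?a + ?b"
    using hs_diff_left[OF Z psd_carrier[OF W] c\<sigma>] by simp
  then show "?a + ?b \<le> 1" using hs_density_le_one[OF Z ZI \<sigma>] by simp
  show "meas_prep W S (Z - W) T \<sigma> = complex_of_real ?a \<cdot>\<^sub>m S + complex_of_real ?b \<cdot>\<^sub>m T"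
    unfolding meas_prep_def using hs_psd_real[OF W p\<sigma>] hs_psd_real[OF ZW p\<sigma>] by simp
qed simp

lemma smult_mixture_eq:
  assumes c: "\<sigma> \<in> carrier_mat m m" "\<tau> \<in> carrier_mat m m" and pt: "p * t = a * R" and p: "p = a + b"
  shows "complex_of_real a \<cdot>\<^sub>m (complex_of_real R \<cdot>\<^sub>m \<sigma> - complex_of_real (R - 1) \<cdot>\<^sub>m \<tau>) + complex_of_real b \<cdot>\<^sub>m \<tau>
    = complex_of_real p \<cdot>\<^sub>m (complex_of_real t \<cdot>\<^sub>m \<sigma> + complex_of_real (1 - t) \<cdot>\<^sub>m \<tau>)"
proof -
  have entry: "complex_of_real a * (complex_of_real R * x - complex_of_real (R - 1) * y) + complex_of_real b * y
      = complex_of_real p * (complex_of_real t * x + complex_of_real (1 - t) * y)" for x y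
  proof -
    have "complex_of_real a * (complex_of_real R * x - complex_of_real (R - 1) * y) + complex_of_real b * y
        = complex_of_real (a * R) * x + complex_of_real (a + b - a * R) * y"
      by (simp add: algebra_simps)
    also have "\<dots> = complex_of_real (p * t) * x + complex_of_real (p * (1 - t)) * y"
      using pt unfolding p by (simp add: algebra_simps)
    also have "\<dots> = complex_of_real p * (complex_of_real t * x + complex_of_real (1 - t) * y)"
      by (simp add: algebra_simps)
    finally show ?thesis .
  qed
  show ?thesis by (intro eq_matI) (use c in \<open>auto simp: entry simp del: of_real_diff\<close>)
qed

text \<open>The convex mixture behind the lower bound: if \<open>\<rho>' = R \<sigma>\<^sub>0 - (R - 1) \<tau>\<close>, then
  \<open>a \<rho>' + b \<tau> = (a + b) (t \<sigma>\<^sub>0 + (1 - t) \<tau>)\<close> with \<open>t = a R / (a + b) \<in> [0,1]\<close>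
  (and \<open>t = 0\<close> when \<open>a + b = 0\<close>, by the convention \<open>x / 0 = 0\<close>).\<close>

lemma subnormalised_free_mixture:
  assumes F': "free_set m F'" and \<sigma>\<^sub>0: "\<sigma>\<^sub>0 \<in> F'" and \<tau>: "\<tau> \<in> F'"
    and R: "1 \<le> R" and \<rho>': "\<rho>' = complex_of_real R \<cdot>\<^sub>m \<sigma>\<^sub>0 - complex_of_real (R - 1) \<cdot>\<^sub>m \<tau>"
    and ab: "0 \<le> a" "0 \<le> b" "a + b \<le> 1" "a * R \<le> a + b"
  shows "subnormalised_free F' (complex_of_real a \<cdot>\<^sub>m \<rho>' + complex_of_real b \<cdot>\<^sub>m \<tau>)"
proof -
  define p where "p = a + b"
  define t where "t = a * R / p"
  have p: "0 \<le> p" "p \<le> 1" using ab unfolding p_def by auto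
  have pt: "p * t = a * R" using ab unfolding t_def p_def by (cases "a + b = 0") auto
  have t: "0 \<le> t" "t \<le> 1" using ab R unfolding t_def p_def by (auto simp: divide_le_eq_1)
  have mem: "complex_of_real t \<cdot>\<^sub>m \<sigma>\<^sub>0 + complex_of_real (1 - t) \<cdot>\<^sub>m \<tau> \<in> F'"
    using F' \<sigma>\<^sub>0 \<tau> t unfolding free_set_def mat_convex_def by blast
  have c: "\<sigma>\<^sub>0 \<in> carrier_mat m m" "\<tau> \<in> carrier_mat m m"
    using density_carrier[OF free_set_density[OF F']] \<sigma>\<^sub>0 \<tau> by auto
  show ?thesis
    unfolding \<rho>' smult_mixture_eq[OF c pt p_def] by (rule subnormalised_free_smult[OF mem p])
qed

lemma RFF_free_mixture:
  assumes F': "free_set m F'" and ne: "F' \<noteq> {}" and \<rho>': "density m \<rho>'"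
  obtains \<tau> where "\<tau> \<in> F'" "\<And>a b. 0 \<le> a \<Longrightarrow> 0 \<le> b \<Longrightarrow> a + b \<le> 1 \<Longrightarrow>
      ereal a \<le> einv (RFF F' \<rho>') * ereal (a + b) \<Longrightarrow>
      subnormalised_free F' (complex_of_real a \<cdot>\<^sub>m \<rho>' + complex_of_real b \<cdot>\<^sub>m \<tau>)"
proof (cases "RFF F' \<rho>'")
  case (real R)
  then have R: "1 \<le> R" using RFF_ge_one[OF F' \<rho>'] by simp
  obtain \<sigma>\<^sub>0 \<tau> where "\<sigma>\<^sub>0 \<in> F'" "\<tau> \<in> F'"
    and dec: "\<rho>' = complex_of_real R \<cdot>\<^sub>m \<sigma>\<^sub>0 - complex_of_real (R - 1) \<cdot>\<^sub>m \<tau>"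
    using RFF_attained[OF F' \<rho>' real] by blast
  moreover have "a * R \<le> a + b" if "ereal a \<le> einv (RFF F' \<rho>') * ereal (a + b)" for a b
    using that real R unfolding einv_def by (auto simp: field_simps)
  ultimately show ?thesis using that subnormalised_free_mixture[OF F' _ _ R dec] by blast
next
  case PInf
  obtain \<tau> where \<tau>: "\<tau> \<in> F'" using ne by blast
  have "subnormalised_free F' (complex_of_real a \<cdot>\<^sub>m \<rho>' + complex_of_real b \<cdot>\<^sub>m \<tau>)"
    if "0 \<le> a" "0 \<le> b" "a + b \<le> 1" "ereal a \<le> einv (RFF F' \<rho>') * ereal (a + b)" for a b
  proof -
    have "a = 0" using that PInf unfolding einv_def by simp
    moreover have "\<rho>' \<in> carrier_mat m m" "\<tau> \<in> carrier_mat m m"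
      using \<rho>' density_carrier[OF free_set_density[OF F' \<tau>]] density_carrier by auto
    ultimately have "complex_of_real a \<cdot>\<^sub>m \<rho>' + complex_of_real b \<cdot>\<^sub>m \<tau> = complex_of_real b \<cdot>\<^sub>m \<tau>"
      by (intro eq_matI) auto
    then show ?thesis using subnormalised_free_smult[OF \<tau>] that by simp
  qed
  then show ?thesis using that \<tau> by blast
next
  case MInf
  then show ?thesis using RFF_ge_one[OF F' \<rho>'] by simp
qed

lemma Hfeas_le_Ptrans:
  assumes F: "free_set n F" and F': "free_set m F'" and ne: "F' \<noteq> {}"
    and \<rho>: "density n \<rho>" and \<rho>': "density m \<rho>'" and h: "Hfeas n F \<rho> (RFF F' \<rho>') W Z"
  shows "Re (hs \<rho> W) \<le> Ptrans n m F F' \<rho> \<rho>'"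
proof -
  note psds = Hfeas_psd[OF h]
  obtain \<tau> where \<tau>: "\<tau> \<in> F'" and mixture: "\<And>a b. 0 \<le> a \<Longrightarrow> 0 \<le> b \<Longrightarrow> a + b \<le> 1 \<Longrightarrow>
      ereal a \<le> einv (RFF F' \<rho>') * ereal (a + b) \<Longrightarrow>
      subnormalised_free F' (complex_of_real a \<cdot>\<^sub>m \<rho>' + complex_of_real b \<cdot>\<^sub>m \<tau>)"
    using RFF_free_mixture[OF F' ne \<rho>'] by blast
  have d\<tau>: "density m \<tau>" by (rule free_set_density[OF F' \<tau>])
  let ?E = "meas_prep W \<rho>' (Z - W) \<tau>"
  have "subnormalised_free F' (?E \<sigma>)" if \<sigma>: "\<sigma> \<in> F" for \<sigma>
  proof -
    obtain a b where "0 \<le> a" "0 \<le> b" "a + b \<le> 1" "Re (hs W \<sigma>) = a" "Re (hs Z \<sigma>) = a + b"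
      and E\<sigma>: "?E \<sigma> = complex_of_real a \<cdot>\<^sub>m \<rho>' + complex_of_real b \<cdot>\<^sub>m \<tau>"
      using meas_prep_apply_density[OF psds(1,2,3,5) free_set_density[OF F \<sigma>]
          density_carrier[OF \<rho>'] density_carrier[OF d\<tau>]] by blast
    moreover have "ereal (Re (hs W \<sigma>)) \<le> einv (RFF F' \<rho>') * ereal (Re (hs Z \<sigma>))"
      using h \<sigma> unfolding Hfeas_def by blast
    ultimately show ?thesis using mixture by simp
  qed
  then have E: "?E \<in> free_ops n m F F'"
    unfolding free_ops_iff using CPTNI_meas_prep[OF psds(1,2,3,5) \<rho>' d\<tau>] by blast
  obtain a b where "Re (hs W \<rho>) = a" "Re (hs Z \<rho>) = a + b"
    and E\<rho>: "?E \<rho> = complex_of_real a \<cdot>\<^sub>m \<rho>' + complex_of_real b \<cdot>\<^sub>m \<tau>"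
    using meas_prep_apply_density[OF psds(1,2,3,5) \<rho> density_carrier[OF \<rho>'] density_carrier[OF d\<tau>]]
    by blast
  moreover have "hs W \<rho> = hs Z \<rho>" using h unfolding Hfeas_def by blast
  moreover have "hs \<rho> W = hs W \<rho>" by (rule hs_comm[OF density_carrier[OF \<rho>] psds(4)])
  ultimately have "b = 0" and "Re (hs \<rho> W) = a" by simp_all
  moreover have "complex_of_real a \<cdot>\<^sub>m \<rho>' + complex_of_real 0 \<cdot>\<^sub>m \<tau> = complex_of_real a \<cdot>\<^sub>m \<rho>'"
    by (rule eq_matI) (use density_carrier[OF \<rho>'] density_carrier[OF d\<tau>] in auto)
  ultimately show ?thesis using le_Ptrans[OF \<rho> \<rho>' E] E\<rho> by simp
qed

theorem theorem7:
  fixes n m :: nat and F F' :: "complex mat set" and \<rho> \<rho>' :: "complex mat"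
  assumes "free_set n F" and "free_set m F'" and "F' \<noteq> {}"
    and "density n \<rho>" and "density m \<rho>'"
  shows "Hval n F \<rho> (einv (ereal (VF m F' \<rho>'))) \<ge> Ptrans n m F F' \<rho> \<rho>'
       \<and> Ptrans n m F F' \<rho> \<rho>' \<ge> Hval n F \<rho> (RFF F' \<rho>')"
proof
  show "Ptrans n m F F' \<rho> \<rho>' \<le> Hval n F \<rho> (einv (ereal (VF m F' \<rho>')))"
    using Ptrans_le[OF assms(2,3,5)] free_op_le_Hval[OF assms(1,2,4,5)] by blast
  show "Hval n F \<rho> (RFF F' \<rho>') \<le> Ptrans n m F F' \<rho> \<rho>'"
    using Hval_le[OF assms(1)] Hfeas_le_Ptrans[OF assms] by blast
qed

end
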